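(* Let $G$ satisfy Condition 1, let the admissible input functions satisfy $\bigcap_{j=1}^kX_j\neq\emptyset$, and let the non-faulty agents run Algorithm 2 with step sizes as in the context, from arbitrary initial states and against arbitrary behavior of the faulty agents. Then there exists $x^*\in X$ such that for every non-faulty agent $i$, $\lim_{t\to\infty}|x_i(t)-x^*|=0$.
   Context: A synchronous system of $n$ agents communicates over a directed graph $G=(\mathcal{V},\mathcal{E})$, $\mathcal{V}=\{1,\dots,n\}$, without self-loops; $N_i^-=\{j:(j,i)\in\mathcal{E}\}$. At most $f$ agents are Byzantine faulty (may send arbitrary, possibly inconsistent values); $\mathcal{F}$ is the set of faulty agents. A function $h:\mathbb{R}\to\mathbb{R}$ is admissible if it is convex, $L$-Lipschitz, and $\arg\min h$ is nonempty and compact. Given admissible $h_1,\dots,h_k$ and an assignment matrix $\mathbf{A}\in\mathbb{R}^{k\times n}$ with nonnegative entries and columns summing to $1$, agent $i$ holds $g_i(x)=\sum_{j=1}^k\mathbf{A}_{ji}h_j(x)$ (agents do not know $\mathbf{A}$). Let $X_j=\arg\min h_j$ and $X=\arg\min h$ with $h=\frac1k\sum_{j=1}^kh_j$. Sparsity parameter $sp(\mathbf{A})$: smallest $s$ such that the sum of any $s$ columns of $\mathbf{A}$ is component-wise positive ($n+1$ if the sum of all columns is not). Reduced graph w.r.t. a set $\mathcal{F}'$ with $|\mathcal{F}'|\le f$: subgraph of $G$ obtained by removing the nodes of $\mathcal{F}'$ with their edges and then up to $f$ additional incoming edges at each remaining node. Source component: set of nodes of a graph each having a directed path to every other node of that graph.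 Condition 1: for every $\mathcal{F}'\subseteq\mathcal{V}$ with $|\mathcal{F}'|\le f$, every reduced graph w.r.t. $\mathcal{F}'$ has a source component with at least $\max\{f+1,sp(\mathbf{A})\}$ nodes. Step sizes: $\alpha(t)\ge0$ with $\alpha(t+1)\le\alpha(t)$ for all $t\ge0$, $\sum_{t}\alpha(t)=\infty$, $\sum_t\alpha^2(t)<\infty$. Algorithm 2: each non-faulty agent $i$ starts with an arbitrary $x_i(0)\in\mathbb{R}$; in iteration $t\ge1$ it sends $x_i(t-1)$ on all outgoing edges, receives the multiset of $|N_i^-|$ values on its incoming edges (a default value replaces any missing message), sorts them, discards the $f$ smallest and $f$ largest values (ties broken arbitrarily), lets $N_i^*(t)$ be the set of agents from which the remaining $|N_i^-|-2f$ values came with $w_j$ the value received from $j$, sets $w_i=x_i(t-1)$, and updates $x_i(t)=\frac{1}{|N_i^*(t)|+1}\sum_{j\in\{i\}\cup N_i^*(t)}w_j-\alpha(t-1)d_i(t-1)$, where $d_i(t-1)$ is a subgradient of $g_i$ at $x_i(t-1)$. *)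

theory Defs
  imports "HOL-Analysis.Analysis"
begin

text \<open>Agents are 1..n. A graph is an edge set E of pairs (j,i) meaning an edge from j to i.\<close>

definition in_nbrs :: "(nat \<times> nat) set \<Rightarrow> nat \<Rightarrow> nat set" where
  "in_nbrs E i = {j. (j, i) \<in> E}"

definition argmin_set :: "(real \<Rightarrow> real) \<Rightarrow> real set" where
  "argmin_set h = {x. \<forall>y. h x \<le> h y}"

definition admissible :: "real \<Rightarrow> (real \<Rightarrow> real) \<Rightarrow> bool" where
  "admissible L h \<longleftrightarrow> convex_on UNIV h \<and> L-lipschitz_on UNIV h \<and>
     argmin_set h \<noteq> {} \<and> compact (argmin_set h)"

definition cols_pos :: "nat \<Rightarrow> nat \<Rightarrow> (nat \<Rightarrow> nat \<Rightarrow> real) \<Rightarrow> nat \<Rightarrow> bool" where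
  "cols_pos k n A s \<longleftrightarrow> (\<forall>S. S \<subseteq> {1..n} \<and> card S = s \<longrightarrow>
       (\<forall>j\<in>{1..k}. (\<Sum>i\<in>S. A j i) > 0))"

definition sparsity :: "nat \<Rightarrow> nat \<Rightarrow> (nat \<Rightarrow> nat \<Rightarrow> real) \<Rightarrow> nat" where
  "sparsity k n A = (LEAST s. (s \<le> n \<and> cols_pos k n A s) \<or> s = n + 1)"

definition reduced_graph :: "nat set \<Rightarrow> (nat \<times> nat) set \<Rightarrow> nat \<Rightarrow> nat set \<Rightarrow> (nat \<times> nat) set \<Rightarrow> bool" where
  "reduced_graph V E f F' E' \<longleftrightarrow>
     E' \<subseteq> E \<inter> ((V - F') \<times> (V - F')) \<and>
     (\<forall>i\<in>V - F'. card ({j\<in>V - F'. (j, i) \<in> E} - {j. (j, i) \<in> E'}) \<le> f)"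

definition source_component :: "nat set \<Rightarrow> (nat \<times> nat) set \<Rightarrow> nat set" where
  "source_component W E' = {v\<in>W. \<forall>u\<in>W. (v, u) \<in> E'\<^sup>*}"

definition condition1 :: "nat set \<Rightarrow> (nat \<times> nat) set \<Rightarrow> nat \<Rightarrow> nat \<Rightarrow> bool" where
  "condition1 V E f sp \<longleftrightarrow>
     (\<forall>F' E'. F' \<subseteq> V \<and> card F' \<le> f \<and> reduced_graph V E f F' E' \<longrightarrow>
        card (source_component (V - F') E') \<ge> max (f + 1) sp)"

definition subgradient :: "(real \<Rightarrow> real) \<Rightarrow> real \<Rightarrow> real \<Rightarrow> bool" where
  "subgradient g x d \<longleftrightarrow> (\<forall>y. g y \<ge> g x + d * (y - x))"

text \<open>One update of Algorithm 2 at non-faulty agent i in iteration t \<ge> 1.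
  msg t j i is the value agent i receives from j in iteration t (arbitrary if j is faulty).\<close>
definition alg2_update ::
  "(nat \<times> nat) set \<Rightarrow> nat \<Rightarrow> (nat \<Rightarrow> real) \<Rightarrow> (real \<Rightarrow> real)
   \<Rightarrow> (nat \<Rightarrow> nat \<Rightarrow> nat \<Rightarrow> real) \<Rightarrow> (nat \<Rightarrow> nat \<Rightarrow> real) \<Rightarrow> nat \<Rightarrow> nat \<Rightarrow> bool" where
  "alg2_update E f \<alpha> gi msg x i t \<longleftrightarrow>
     (let m = card (in_nbrs E i) in
      \<exists>\<sigma> d. bij_betw \<sigma> {..<m} (in_nbrs E i) \<and>
        (\<forall>a b. a \<le> b \<and> b < m \<longrightarrow> msg t (\<sigma> a) i \<le> msg t (\<sigma> b) i) \<and>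
        subgradient gi (x i (t - 1)) d \<and>
        (let Nstar = \<sigma> ` {f..<m - f} in
          x i t = (x i (t - 1) + (\<Sum>j\<in>Nstar. msg t j i)) / (real (card Nstar) + 1)
                  - \<alpha> (t - 1) * d))"

text \<open>An execution of Algorithm 2: x i t is the state of agent i after iteration t.\<close>
definition alg2_exec ::
  "nat set \<Rightarrow> (nat \<times> nat) set \<Rightarrow> nat \<Rightarrow> nat set \<Rightarrow> (nat \<Rightarrow> real) \<Rightarrow> (nat \<Rightarrow> real \<Rightarrow> real)
   \<Rightarrow> (nat \<Rightarrow> nat \<Rightarrow> nat \<Rightarrow> real) \<Rightarrow> (nat \<Rightarrow> nat \<Rightarrow> real) \<Rightarrow> bool" where
  "alg2_exec V E f F \<alpha> g msg x \<longleftrightarrow>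
     (\<forall>t\<ge>1. \<forall>j\<in>V - F. \<forall>i. msg t j i = x j (t - 1)) \<and>
     (\<forall>t\<ge>1. \<forall>i\<in>V - F. alg2_update E f \<alpha> (g i) msg x i t)"

end

theory Submission
  imports Defs
begin

(*
  Condition 1 forces the trimmed means of the honest agents to contract their spread by a fixed
  factor every n iterations, up to the accumulated step sizes; hence the spread tends to 0 and
  alpha * spread is summable. Relative to a common minimizer z of the h_j every subgradient points
  away from z, so the largest distance of an honest agent to z is almost decreasing and converges;
  as the steps tend to 0, all honest agents converge to one limit w. Were w beyond the minimizers,
  some h_j would not be minimal there: the agents weighting h_j keep being pushed back, and by the
  sparsity part of Condition 1 this push spreads to every honest agent with a total size
  proportional to the divergent sum of the step sizes.
*)

section \<open>Reduced graphs\<close>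

definition influenced_by :: "(nat \<times> nat) set \<Rightarrow> nat \<Rightarrow> nat set \<Rightarrow> nat \<Rightarrow> bool" where
  "influenced_by E f S i \<longleftrightarrow> f + 1 \<le> card (in_nbrs E i \<inter> S)"

definition expandable :: "nat set \<Rightarrow> (nat \<times> nat) set \<Rightarrow> nat \<Rightarrow> nat set \<Rightarrow> bool" where
  "expandable N E f S \<longleftrightarrow> (\<exists>i\<in>N - S. influenced_by E f S i)"

definition closed_edges :: "(nat \<times> nat) set \<Rightarrow> nat set \<Rightarrow> nat set \<Rightarrow> (nat \<times> nat) set" where
  "closed_edges E N S = {(a, b) \<in> E. a \<in> N \<and> b \<in> N \<and> (a \<in> S \<longrightarrow> b \<in> S)}"

lemma source_component_outside:
  assumes s: "s \<in> source_component W E'" and u: "u \<in> W" "u \<notin> S"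
    and closed: "\<And>a b. (a, b) \<in> E' \<Longrightarrow> a \<in> S \<Longrightarrow> b \<in> S"
  shows "s \<notin> S"
proof -
  have "(s, u) \<in> E'\<^sup>*" using s u unfolding source_component_def by blast
  then show ?thesis using u(2)
    by (induction rule: converse_rtrancl_induct) (auto dest: closed)
qed

section \<open>Trimmed means\<close>

text \<open>The only property of the trimmed mean of Algorithm 2 that the convergence proof needs.\<close>

definition averaging_step ::
  "nat set \<Rightarrow> (nat \<times> nat) set \<Rightarrow> nat \<Rightarrow> nat \<Rightarrow> (nat \<Rightarrow> real) \<Rightarrow> real \<Rightarrow> nat \<Rightarrow> bool" where
  "averaging_step N E f n v a i \<longleftrightarrow>
     (\<forall>S c C. S \<subseteq> N \<longrightarrow> (\<forall>j\<in>S. v j \<le> c) \<longrightarrow> (\<forall>j\<in>N. v j \<le> C) \<longrightarrow> c \<le> C \<longrightarrow>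
        i \<in> S \<or> influenced_by E f S i \<longrightarrow> a \<le> C - (C - c) / (real n + 1))"

lemma averaging_stepD:
  assumes "averaging_step N E f n v a i" "S \<subseteq> N" "\<forall>j\<in>S. v j \<le> c" "\<forall>j\<in>N. v j \<le> C" "c \<le> C"
    "i \<in> S \<or> influenced_by E f S i"
  shows "a \<le> C - (C - c) / (real n + 1)"
  using assms(1) unfolding averaging_step_def
  by (elim allE[where x = S] allE[where x = c] allE[where x = C]) (use assms(2-6) in blast)

lemma averaging_step_le_max:
  assumes "averaging_step N E f n v a i" "i \<in> N" "\<forall>j\<in>N. v j \<le> C"
  shows "a \<le> C"
  using averaging_stepD[OF assms(1) subset_refl assms(3) assms(3) order_refl] assms(2) by simp

lemma sorted_trimmed_le:
  fixes w :: "nat \<Rightarrow> real"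
  assumes sorted: "mono_on {..<m} w" and B: "B \<subseteq> {..<m}" "card B \<le> f" and p: "p < m - f"
    and bound: "\<And>b. b < m \<Longrightarrow> b \<notin> B \<Longrightarrow> w b \<le> C"
  shows "w p \<le> C"
proof -
  have "\<not> {p..<m} \<subseteq> B"
  proof
    assume "{p..<m} \<subseteq> B"
    then have "card {p..<m} \<le> card B" using finite_subset[OF B(1)] by (intro card_mono) auto
    then show False using p B(2) by simp
  qed
  then obtain b where b: "b \<in> {p..<m}" "b \<notin> B" by blast
  then have "w p \<le> w b" by (intro mono_onD[OF sorted]) auto
  also have "\<dots> \<le> C" using b bound by simp
  finally show ?thesis .
qed

lemma sorted_le_of_many_le:
  fixes w :: "nat \<Rightarrow> real"
  assumes sorted: "mono_on {..<m} w" and P: "P \<subseteq> {..<m}" "f + 1 \<le> card P"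
    and bound: "\<forall>b\<in>P. w b \<le> c"
  shows "w f \<le> c"
proof -
  have "\<not> P \<subseteq> {..<f}"
  proof
    assume "P \<subseteq> {..<f}"
    then have "card P \<le> f" using card_mono[of "{..<f}" P] by simp
    then show False using P(2) by simp
  qed
  then obtain b where b: "b \<in> P" "b \<notin> {..<f}" by blast
  then have "w f \<le> w b" using P(1) by (intro mono_onD[OF sorted]) auto
  also have "\<dots> \<le> c" using b bound by simp
  finally show ?thesis .
qed

lemma trimmed_average_le:
  fixes w :: "nat \<Rightarrow> real"
  assumes I: "finite I" "card I \<le> n" and up: "\<forall>p\<in>I. w p \<le> C" and own: "v \<le> C" and cC: "c \<le> C"
    and low: "v \<le> c \<or> (\<exists>p\<in>I. w p \<le> c)"
  shows "(v + (\<Sum>p\<in>I. w p)) / (real (card I) + 1) \<le> C - (C - c) / (real n + 1)"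
proof -
  have key: "v + (\<Sum>p\<in>I. w p) \<le> real (card I) * C + c"
  proof (cases "v \<le> c")
    case True
    have "(\<Sum>p\<in>I. w p) \<le> real (card I) * C" using sum_bounded_above[of I w C] up by simp
    then show ?thesis using True by linarith
  next
    case False
    then obtain p0 where p0: "p0 \<in> I" "w p0 \<le> c" using low by auto
    have "(\<Sum>p\<in>I - {p0}. w p) \<le> real (card (I - {p0})) * C"
      using sum_bounded_above[of "I - {p0}" w C] up by simp
    also have "\<dots> = real (card I) * C - C"
    proof -
      have "1 \<le> card I" using p0 I by (metis Suc_leI card_gt_0_iff empty_iff One_nat_def)
      then show ?thesis using p0 I by (simp add: of_nat_diff left_diff_distrib)
    qed
    finally show ?thesis using p0 I own sum.remove[of I p0 w] by linarith
  qed
  have "(v + (\<Sum>p\<in>I. w p)) / (real (card I) + 1) \<le> (real (card I) * C + c) / (real (card I) + 1)"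
    using key by (rule divide_right_mono) simp
  also have "\<dots> = C - (C - c) / (real (card I) + 1)"
    by (simp add: field_split_simps)
  also have "\<dots> \<le> C - (C - c) / (real n + 1)"
    using cC I(2) by (simp add: divide_left_mono)
  finally show ?thesis .
qed

lemma card_bij_betw_preimage:
  assumes "bij_betw \<sigma> A X"
  shows "card {b \<in> A. \<sigma> b \<in> S} = card (X \<inter> S)"
proof -
  have "\<sigma> ` {b \<in> A. \<sigma> b \<in> S} = X \<inter> S" using assms unfolding bij_betw_def by auto
  moreover have "inj_on \<sigma> {b \<in> A. \<sigma> b \<in> S}" using assms unfolding bij_betw_def
    by (auto intro: inj_on_subset)
  ultimately show ?thesis by (metis card_image)
qed

lemma reversed_sorting:
  fixes w :: "nat \<Rightarrow> real"
  assumes \<sigma>: "bij_betw \<sigma> {..<m} X" and sorted: "mono_on {..<m} (w \<circ> \<sigma>)"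
  shows "bij_betw (\<sigma> \<circ> (\<lambda>p. m - Suc p)) {..<m} X"
    and "mono_on {..<m} ((\<lambda>j. - w j) \<circ> (\<sigma> \<circ> (\<lambda>p. m - Suc p)))"
    and "(\<sigma> \<circ> (\<lambda>p. m - Suc p)) ` {f..<m - f} = \<sigma> ` {f..<m - f}"
proof -
  have "bij_betw (\<lambda>p. m - Suc p) {..<m} {..<m}"
    by (rule bij_betwI[where g = "\<lambda>p. m - Suc p"]) auto
  then show "bij_betw (\<sigma> \<circ> (\<lambda>p. m - Suc p)) {..<m} X" using \<sigma> by (rule bij_betw_trans)
  show "mono_on {..<m} ((\<lambda>j. - w j) \<circ> (\<sigma> \<circ> (\<lambda>p. m - Suc p)))"
  proof (rule mono_onI)
    fix a b assume "a \<in> {..<m}" "b \<in> {..<m}" "a \<le> b"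
    then have "(w \<circ> \<sigma>) (m - Suc b) \<le> (w \<circ> \<sigma>) (m - Suc a)" by (intro mono_onD[OF sorted]) auto
    then show "((\<lambda>j. - w j) \<circ> (\<sigma> \<circ> (\<lambda>p. m - Suc p))) a \<le> ((\<lambda>j. - w j) \<circ> (\<sigma> \<circ> (\<lambda>p. m - Suc p))) b"
      by simp
  qed
  have "(\<lambda>p. m - Suc p) ` {f..<m - f} = {f..<m - f}"
  proof (intro subset_antisym subsetI)
    fix p assume "p \<in> {f..<m - f}"
    then have "m - Suc p \<in> {f..<m - f}" "p = m - Suc (m - Suc p)" by auto
    then show "p \<in> (\<lambda>p. m - Suc p) ` {f..<m - f}" by blast
  qed auto
  then show "(\<sigma> \<circ> (\<lambda>p. m - Suc p)) ` {f..<m - f} = \<sigma> ` {f..<m - f}"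
    by (metis image_comp)
qed

section \<open>Honest agents under Condition 1\<close>

locale byzantine_network =
  fixes n f :: nat and E :: "(nat \<times> nat) set" and F :: "nat set" and sp :: nat
  assumes edges_in: "E \<subseteq> {1..n} \<times> {1..n}" and loop_free: "\<And>i. (i, i) \<notin> E"
    and faulty_in: "F \<subseteq> {1..n}" and few_faulty: "card F \<le> f"
    and cond1: "condition1 {1..n} E f sp"
begin

abbreviation honest :: "nat set" where
  "honest \<equiv> {1..n} - F"

lemma in_nbrs_subset: "in_nbrs E i \<subseteq> {1..n}"
  using edges_in unfolding in_nbrs_def by auto

lemma finite_in_nbrs: "finite (in_nbrs E i)"
  using in_nbrs_subset by (rule finite_subset) simp

lemma card_in_nbrs_le: "card (in_nbrs E i) \<le> n"
  using card_mono[OF _ in_nbrs_subset] by simp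

text \<open>If no honest agent outside \<open>S\<close> is influenced by \<open>S\<close>, deleting the edges that leave \<open>S\<close>
  costs every agent at most \<open>f\<close> incoming edges.\<close>

lemma closed_edges_reduced_graph:
  assumes cover: "Lo \<union> Hi = honest"
    and Lo: "\<not> expandable honest E f Lo" and Hi: "\<not> expandable honest E f Hi"
  shows "reduced_graph {1..n} E f F (closed_edges E honest Lo \<inter> closed_edges E honest Hi)"
  unfolding reduced_graph_def
proof (intro conjI ballI)
  show "closed_edges E honest Lo \<inter> closed_edges E honest Hi \<subseteq> E \<inter> (honest \<times> honest)"
    unfolding closed_edges_def by auto
next
  fix i assume i: "i \<in> honest"
  let ?lost = "{j \<in> honest. (j, i) \<in> E} - {j. (j, i) \<in> closed_edges E honest Lo \<inter> closed_edges E honest Hi}"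
  have lost: "?lost \<subseteq> (if i \<in> Lo then {} else in_nbrs E i \<inter> Lo) \<union> (if i \<in> Hi then {} else in_nbrs E i \<inter> Hi)"
    using i by (auto simp: closed_edges_def in_nbrs_def)
  have bound: "card ?lost \<le> f"
    if "i \<notin> S" "\<not> expandable honest E f S" "?lost \<subseteq> in_nbrs E i \<inter> S" for S
  proof -
    have "card ?lost \<le> card (in_nbrs E i \<inter> S)"
      using that(3) finite_in_nbrs[of i] by (intro card_mono) auto
    moreover have "\<not> influenced_by E f S i" using that(1,2) i unfolding expandable_def by blast
    ultimately show ?thesis unfolding influenced_by_def by simp
  qed
  show "card ?lost \<le> f"
  proof (cases "i \<in> Lo")
    case True
    show ?thesis
    proof (cases "i \<in> Hi")
      case False
      then show ?thesis using bound[OF False Hi] lost True by simp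
    next
      case True
      then have empty: "?lost = {}" using lost \<open>i \<in> Lo\<close> by simp
      show ?thesis unfolding empty by simp
    qed
  next
    case False
    then have "i \<in> Hi" using cover i by blast
    then show ?thesis using bound[OF False Lo] lost False by simp
  qed
qed

lemma large_source_component:
  assumes cover: "Lo \<union> Hi = honest"
    and Lo: "\<not> expandable honest E f Lo" and Hi: "\<not> expandable honest E f Hi"
  shows "max (f + 1) sp \<le> card (source_component honest (closed_edges E honest Lo \<inter> closed_edges E honest Hi))"
  using cond1 faulty_in few_faulty closed_edges_reduced_graph[OF assms]
  unfolding condition1_def by blast

lemma source_component_outside_closed:
  assumes "s \<in> source_component honest (closed_edges E honest Lo \<inter> closed_edges E honest Hi)"
    and "Lo \<subset> honest"
  shows "s \<in> honest - Lo"
  using source_component_outside[OF assms(1), of _ Lo] assms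
  unfolding closed_edges_def source_component_def by blast

lemma proper_cover_expandable:
  assumes cover: "Lo \<union> Hi = honest" and "Lo \<subset> honest" "Hi \<subset> honest"
  shows "expandable honest E f Lo \<or> expandable honest E f Hi"
proof (rule ccontr)
  assume "\<not> ?thesis"
  then have "f + 1 \<le> card (source_component honest (closed_edges E honest Lo \<inter> closed_edges E honest Hi))"
    using large_source_component[OF cover] by auto
  then obtain s where "s \<in> source_component honest (closed_edges E honest Lo \<inter> closed_edges E honest Hi)"
    by fastforce
  then show False
    using source_component_outside_closed[of s Lo Hi] source_component_outside_closed[of s Hi Lo]
      assms by (auto simp: Int_commute)
qed

lemma sparsity_le_card_honest: "sp \<le> card honest"
proof -
  have "sp \<le> card (source_component honest (closed_edges E honest honest \<inter> closed_edges E honest honest))"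
    using large_source_component[of honest honest] unfolding expandable_def by simp
  also have "\<dots> \<le> card honest"
    by (intro card_mono) (auto simp: source_component_def)
  finally show ?thesis .
qed

lemma support_superset_expandable:
  assumes cols: "cols_pos k n A sp" and j: "j \<in> {1..k}" and nonneg: "\<forall>i\<in>{1..n}. 0 \<le> A j i"
    and S: "{i \<in> honest. 0 < A j i} \<subseteq> S" "S \<subset> honest"
  shows "expandable honest E f S"
proof (rule ccontr)
  assume S_fixed: "\<not> ?thesis"
  have all_fixed: "\<not> expandable honest E f honest" by (simp add: expandable_def)
  let ?C = "source_component honest (closed_edges E honest S \<inter> closed_edges E honest honest)"
  have "max (f + 1) sp \<le> card ?C"
    by (rule large_source_component) (use S S_fixed all_fixed in auto)
  then have "sp \<le> card ?C" by simp
  then obtain T where T: "T \<subseteq> ?C" "card T = sp"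
    by (meson obtain_subset_with_card_n)
  have T_out: "T \<subseteq> honest - S"
    using T(1) source_component_outside_closed[OF _ S(2)] by blast
  then have "T \<subseteq> {1..n}" by blast
  then have "0 < (\<Sum>i\<in>T. A j i)"
    using cols T(2) j unfolding cols_pos_def by blast
  moreover have "A j i = 0" if "i \<in> T" for i
  proof -
    have "i \<in> {1..n}" "\<not> 0 < A j i" using that T_out S(1) by blast+
    then show ?thesis using nonneg by force
  qed
  ultimately show False by simp
qed

lemma influenced_in_degree:
  assumes i: "i \<in> {1..n}" and infl: "influenced_by E f S i"
  shows "2 * f + 1 \<le> card (in_nbrs E i)"
proof (rule ccontr)
  assume small: "\<not> ?thesis"
  have deg: "f + 1 \<le> card (in_nbrs E i)"
    using infl card_mono[OF finite_in_nbrs, of "in_nbrs E i \<inter> S" i]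
    unfolding influenced_by_def by simp
  then have "f \<le> card (in_nbrs E i)" by simp
  then obtain F' where F': "F' \<subseteq> in_nbrs E i" "card F' = f"
    by (meson obtain_subset_with_card_n)
  have "i \<notin> F'" using F' loop_free unfolding in_nbrs_def by auto
  define E' where "E' = {(a, b) \<in> E. a \<notin> F' \<and> b \<notin> F' \<and> b \<noteq> i}"
  text \<open>Cutting all edges into \<open>i\<close> loses at most \<open>deg i - f \<le> f\<close> of them, so \<open>i\<close> becomes a node
    that nobody reaches, while the source component still has at least two nodes.\<close>
  have "reduced_graph {1..n} E f F' E'"
    unfolding reduced_graph_def
  proof (intro conjI ballI)
    show "E' \<subseteq> E \<inter> (({1..n} - F') \<times> ({1..n} - F'))" unfolding E'_def using edges_in by auto
  next
    fix v assume v: "v \<in> {1..n} - F'"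
    let ?lost = "{j \<in> {1..n} - F'. (j, v) \<in> E} - {j. (j, v) \<in> E'}"
    show "card ?lost \<le> f"
    proof (cases "v = i")
      case True
      then have "card ?lost \<le> card (in_nbrs E i - F')"
        using finite_in_nbrs[of i] by (intro card_mono) (auto simp: in_nbrs_def)
      also have "\<dots> = card (in_nbrs E i) - f"
        using F' finite_in_nbrs by (simp add: card_Diff_subset finite_subset)
      finally show ?thesis using small by simp
    next
      case False
      then have lost: "?lost = {}" using v by (auto simp: E'_def)
      show ?thesis unfolding lost by simp
    qed
  qed
  moreover have "F' \<subseteq> {1..n}" using F'(1) in_nbrs_subset by blast
  ultimately have "max (f + 1) sp \<le> card (source_component ({1..n} - F') E')"
    using cond1 F'(2) unfolding condition1_def by blast
  moreover have "f \<noteq> 0" using small deg by auto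
  ultimately have two: "2 \<le> card (source_component ({1..n} - F') E')" by simp
  have "\<not> source_component ({1..n} - F') E' \<subseteq> {i}"
  proof
    assume "source_component ({1..n} - F') E' \<subseteq> {i}"
    then have "card (source_component ({1..n} - F') E') \<le> card {i}" by (rule card_mono[rotated]) simp
    then show False using two by simp
  qed
  then obtain s where s: "s \<in> source_component ({1..n} - F') E'" "s \<noteq> i" by blast
  have "s \<notin> - {i}"
    by (rule source_component_outside[OF s(1), of i])
      (use i \<open>i \<notin> F'\<close> in \<open>auto simp: E'_def\<close>)
  then show False using s(2) by simp
qed

lemma trimmed_values_le:
  fixes w v :: "nat \<Rightarrow> real"
  assumes m: "m = card (in_nbrs E i)" and \<sigma>: "bij_betw \<sigma> {..<m} (in_nbrs E i)"
    and sorted: "mono_on {..<m} (w \<circ> \<sigma>)" and honest_values: "\<forall>j\<in>honest. w j = v j"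
    and below: "\<forall>j\<in>honest. v j \<le> C" and p: "p \<in> {f..<m - f}"
  shows "w (\<sigma> p) \<le> C"
proof -
  define B where "B = {b \<in> {..<m}. \<sigma> b \<in> F}"
  have "card B = card (in_nbrs E i \<inter> F)" unfolding B_def by (rule card_bij_betw_preimage[OF \<sigma>])
  also have "\<dots> \<le> card F" using finite_subset[OF faulty_in] by (intro card_mono) auto
  finally have card_B: "card B \<le> f" using few_faulty by simp
  have honest_pos: "\<sigma> b \<in> honest" if "b < m" "b \<notin> B" for b
    using that \<sigma> in_nbrs_subset unfolding B_def bij_betw_def by blast
  have "(w \<circ> \<sigma>) p \<le> C"
    by (rule sorted_trimmed_le[OF sorted _ card_B])
      (use honest_values below p honest_pos in \<open>auto simp: B_def\<close>)
  then show ?thesis by simp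
qed

lemma trimmed_value_pulled:
  fixes w v :: "nat \<Rightarrow> real"
  assumes i: "i \<in> honest" and m: "m = card (in_nbrs E i)" and \<sigma>: "bij_betw \<sigma> {..<m} (in_nbrs E i)"
    and sorted: "mono_on {..<m} (w \<circ> \<sigma>)" and honest_values: "\<forall>j\<in>honest. w j = v j"
    and S: "S \<subseteq> honest" "\<forall>j\<in>S. v j \<le> c" and infl: "influenced_by E f S i"
  shows "f \<in> {f..<m - f}" and "w (\<sigma> f) \<le> c"
proof -
  show "f \<in> {f..<m - f}" using influenced_in_degree[OF _ infl] i m by simp
  define P where "P = {b \<in> {..<m}. \<sigma> b \<in> S}"
  have "card P = card (in_nbrs E i \<inter> S)" unfolding P_def by (rule card_bij_betw_preimage[OF \<sigma>])
  then have card_P: "f + 1 \<le> card P" using infl unfolding influenced_by_def by simp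
  have "(w \<circ> \<sigma>) f \<le> c"
    by (rule sorted_le_of_many_le[OF sorted _ card_P]) (use S honest_values in \<open>auto simp: P_def\<close>)
  then show "w (\<sigma> f) \<le> c" by simp
qed

lemma trimmed_mean_averaging_step:
  fixes w v :: "nat \<Rightarrow> real"
  assumes i: "i \<in> honest" and m: "m = card (in_nbrs E i)" and \<sigma>: "bij_betw \<sigma> {..<m} (in_nbrs E i)"
    and sorted: "mono_on {..<m} (w \<circ> \<sigma>)" and honest_values: "\<forall>j\<in>honest. w j = v j"
  shows "averaging_step honest E f n v
    ((v i + (\<Sum>j\<in>\<sigma> ` {f..<m - f}. w j)) / (real (card (\<sigma> ` {f..<m - f})) + 1)) i"
  unfolding averaging_step_def
proof (intro allI impI)
  fix S c C
  assume S: "S \<subseteq> honest" and below_c: "\<forall>j\<in>S. v j \<le> c" and below_C: "\<forall>j\<in>honest. v j \<le> C"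
    and cC: "c \<le> C" and pulled: "i \<in> S \<or> influenced_by E f S i"
  define I where "I = {f..<m - f}"
  have "inj_on \<sigma> {..<m}" using \<sigma> by (simp add: bij_betw_def)
  then have "inj_on \<sigma> I" unfolding I_def by (rule inj_on_subset) auto
  then have avg: "(v i + (\<Sum>j\<in>\<sigma> ` I. w j)) / (real (card (\<sigma> ` I)) + 1)
      = (v i + (\<Sum>p\<in>I. (w \<circ> \<sigma>) p)) / (real (card I) + 1)"
    by (simp only: sum.reindex card_image)
  have low: "v i \<le> c \<or> (\<exists>p\<in>I. (w \<circ> \<sigma>) p \<le> c)"
  proof (cases "i \<in> S")
    case False
    then show ?thesis
      using pulled trimmed_value_pulled[OF i m \<sigma> sorted honest_values S below_c] unfolding I_def
        by auto
  qed (use below_c in blast)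
  have card_I: "card I \<le> n" using card_in_nbrs_le[of i] m by (simp add: I_def)
  have "(v i + (\<Sum>p\<in>I. (w \<circ> \<sigma>) p)) / (real (card I) + 1) \<le> C - (C - c) / (real n + 1)"
    by (rule trimmed_average_le[OF _ card_I _ _ cC low])
      (use trimmed_values_le[OF m \<sigma> sorted honest_values below_C] below_C i in \<open>auto simp: I_def\<close>)
  then show "(v i + (\<Sum>j\<in>\<sigma> ` {f..<m - f}. w j)) / (real (card (\<sigma> ` {f..<m - f})) + 1)
      \<le> C - (C - c) / (real n + 1)"
    using avg unfolding I_def by argo
qed

text \<open>The trimmed mean is invariant under negating all values and reversing the sort order, so
  the lower bound is the upper bound for the negated states.\<close>

lemma alg2_update_decomposition:
  assumes i: "i \<in> honest" and upd: "alg2_update E f \<alpha> g msg x i (Suc t)"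
    and honest_msgs: "\<forall>j\<in>honest. msg (Suc t) j i = x j t"
  obtains a d where "x i (Suc t) = a - \<alpha> t * d" and "subgradient g (x i t) d"
    and "averaging_step honest E f n (\<lambda>j. x j t) a i"
    and "averaging_step honest E f n (\<lambda>j. - x j t) (- a) i"
proof -
  define m where "m = card (in_nbrs E i)"
  define w where "w j = msg (Suc t) j i" for j
  obtain \<sigma> d where \<sigma>: "bij_betw \<sigma> {..<m} (in_nbrs E i)"
    and sorted: "\<forall>a b. a \<le> b \<and> b < m \<longrightarrow> w (\<sigma> a) \<le> w (\<sigma> b)"
    and sg: "subgradient g (x i t) d"
    and x_next: "x i (Suc t) = (x i t + (\<Sum>j\<in>\<sigma> ` {f..<m - f}. w j)) / (real (card (\<sigma> ` {f..<m - f})) + 1)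
      - \<alpha> t * d"
    using upd unfolding alg2_update_def Let_def m_def[symmetric] w_def by auto
  define a where "a = (x i t + (\<Sum>j\<in>\<sigma> ` {f..<m - f}. w j)) / (real (card (\<sigma> ` {f..<m - f})) + 1)"
  have mono: "mono_on {..<m} (w \<circ> \<sigma>)" using sorted by (auto intro!: mono_onI)
  have honest_w: "\<forall>j\<in>honest. w j = x j t" using honest_msgs by (simp add: w_def)
  have "averaging_step honest E f n (\<lambda>j. x j t) a i"
    unfolding a_def by (rule trimmed_mean_averaging_step[OF i m_def \<sigma> mono honest_w])
  moreover have "averaging_step honest E f n (\<lambda>j. - x j t)
      ((- x i t + (\<Sum>j\<in>(\<sigma> \<circ> (\<lambda>p. m - Suc p)) ` {f..<m - f}. - w j))
        / (real (card ((\<sigma> \<circ> (\<lambda>p. m - Suc p)) ` {f..<m - f})) + 1)) i"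
    by (rule trimmed_mean_averaging_step[OF i m_def reversed_sorting(1,2)[OF \<sigma> mono]])
      (use honest_w in simp)
  then have "averaging_step honest E f n (\<lambda>j. - x j t) (- a) i"
    unfolding reversed_sorting(3)[OF \<sigma> mono] a_def by (simp add: sum_negf minus_divide_left)
  ultimately show ?thesis using that x_next sg a_def by blast
qed

end

section \<open>Sequences and growing sets\<close>

lemma periodic_contraction_tendsto_zero:
  fixes r e :: "nat \<Rightarrow> real"
  assumes nonneg: "\<And>s. 0 \<le> r s" and l: "0 \<le> l" "l < 1" and T: "1 \<le> T"
    and contraction: "\<And>s. r (s + T) \<le> l * r s + e s" and e: "e \<longlonglongrightarrow> 0"
  shows "r \<longlonglongrightarrow> 0"
proof (rule LIMSEQ_I)
  fix \<epsilon> :: real assume \<epsilon>: "0 < \<epsilon>"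
  obtain S where S: "\<And>s. S \<le> s \<Longrightarrow> e s < (1 - l) * \<epsilon> / 2"
    using order_tendstoD(2)[OF e, of "(1 - l) * \<epsilon> / 2"] l \<epsilon> by (auto simp: eventually_sequentially)
  define D where "D = (\<Sum>\<rho><T. r (S + \<rho>))"
  have decay: "r (S + j * T + \<rho>) \<le> \<epsilon> / 2 + l ^ j * D" if "\<rho> < T" for j \<rho>
  proof (induction j)
    case 0
    have "r (S + \<rho>) \<le> D" unfolding D_def using that nonneg by (intro member_le_sum) auto
    then show ?case using \<epsilon> by simp
  next
    case (Suc j)
    have "r (S + Suc j * T + \<rho>) \<le> l * r (S + j * T + \<rho>) + e (S + j * T + \<rho>)"
      using contraction[of "S + j * T + \<rho>"] by (simp add: add.commute add.left_commute)
    also have "\<dots> \<le> l * (\<epsilon> / 2 + l ^ j * D) + (1 - l) * \<epsilon> / 2"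
      using Suc.IH S[of "S + j * T + \<rho>"] l by (intro add_mono mult_left_mono) auto
    also have "\<dots> = \<epsilon> / 2 + l ^ Suc j * D" by (simp add: field_simps)
    finally show ?case .
  qed
  have "(\<lambda>j. l ^ j * D) \<longlonglongrightarrow> 0"
    using LIMSEQ_power_zero[of l] l by (intro tendsto_mult_left_zero) auto
  then have "\<forall>\<^sub>F j in sequentially. l ^ j * D < \<epsilon> / 2" using \<epsilon> by (intro order_tendstoD(2)) auto
  then obtain J where J: "\<And>j. J \<le> j \<Longrightarrow> l ^ j * D < \<epsilon> / 2"
    by (auto simp: eventually_sequentially)
  show "\<exists>M. \<forall>m\<ge>M. norm (r m - 0) < \<epsilon>"
  proof (intro exI allI impI)
    fix m assume m: "S + J * T \<le> m"
    define j where "j = (m - S) div T"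
    define \<rho> where "\<rho> = (m - S) mod T"
    have m_eq: "m = S + j * T + \<rho>" unfolding j_def \<rho>_def using m by simp
    have "\<rho> < T" unfolding \<rho>_def using T by simp
    have "J * T div T \<le> j" unfolding j_def using m by (intro div_le_mono) simp
    then have "J \<le> j" using T by simp
    have "r m \<le> \<epsilon> / 2 + l ^ j * D" using decay[OF \<open>\<rho> < T\<close>, of j] m_eq by simp
    then show "norm (r m - 0) < \<epsilon>" using J[OF \<open>J \<le> j\<close>] nonneg[of m] by simp
  qed
qed

lemma periodic_contraction_summable:
  fixes u e :: "nat \<Rightarrow> real"
  assumes nonneg: "\<And>s. 0 \<le> u s" and e: "\<And>s. 0 \<le> e s" "summable e" and l: "0 \<le> l" "l < 1"
    and contraction: "\<And>s. u (s + T) \<le> l * u s + e s"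
  shows "summable u"
proof -
  define Q where "Q M = (\<Sum>s<M. u s)" for M
  have Q_mono: "Q M \<le> Q (M + T)" for M unfolding Q_def using nonneg by (intro sum_mono2) auto
  have Q_step: "Q (M + T) \<le> Q T + l * Q M + suminf e" for M
  proof -
    have "Q (M + T) = Q T + (\<Sum>s<M. u (s + T))"
      by (induction M) (simp_all add: Q_def)
    also have "(\<Sum>s<M. u (s + T)) \<le> (\<Sum>s<M. l * u s + e s)" using contraction by (intro sum_mono) auto
    also have "\<dots> = l * Q M + (\<Sum>s<M. e s)" unfolding Q_def
      by (simp add: sum.distrib sum_distrib_left)
    also have "(\<Sum>s<M. e s) \<le> suminf e" using e by (intro sum_le_suminf) auto
    finally show ?thesis by simp
  qed
  have bound: "Q M \<le> (Q T + suminf e) / (1 - l)" for M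
  proof -
    have "l * Q M \<le> l * Q (M + T)" using Q_mono l(1) by (rule mult_left_mono)
    then have "(1 - l) * Q (M + T) \<le> Q T + suminf e" using Q_step[of M]
      by (simp add: left_diff_distrib)
    then have "Q (M + T) \<le> (Q T + suminf e) / (1 - l)" using l
      by (simp add: pos_le_divide_eq mult.commute)
    then show ?thesis using Q_mono[of M] by linarith
  qed
  show ?thesis
    by (rule summableI_nonneg_bounded[where x = "(Q T + suminf e) / (1 - l)"])
      (use nonneg bound in \<open>simp_all add: Q_def\<close>)
qed

lemma almost_decreasing_convergent:
  fixes V e :: "nat \<Rightarrow> real"
  assumes nonneg: "\<And>t. 0 \<le> V t" and step: "\<And>t. V (Suc t) \<le> V t + e t"
    and e: "\<And>t. 0 \<le> e t" "summable e"
  shows "convergent V"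
proof -
  define W where "W t = V t - (\<Sum>s<t. e s)" for t
  have "decseq W"
  proof (rule decseq_SucI)
    show "W (Suc t) \<le> W t" for t using step[of t] unfolding W_def by simp
  qed
  moreover have "- suminf e \<le> W t" for t
    using sum_le_suminf[OF e(2), of "{..<t}"] e(1) nonneg[of t] unfolding W_def by auto
  ultimately obtain LW where "W \<longlonglongrightarrow> LW" using decseq_convergent by blast
  then have "(\<lambda>t. W t + (\<Sum>s<t. e s)) \<longlonglongrightarrow> LW + suminf e"
    by (intro tendsto_add summable_LIMSEQ[OF e(2)])
  then show ?thesis unfolding W_def convergent_def by auto
qed

lemma tendsto_if_dist_tendsto_from_above:
  fixes y :: "nat \<Rightarrow> real"
  assumes dist: "(\<lambda>t. \<bar>y t - q\<bar>) \<longlonglongrightarrow> l"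
    and small_steps: "\<And>t. t0 \<le> t \<Longrightarrow> l / 2 < \<bar>y t - q\<bar> \<and> \<bar>y (Suc t) - y t\<bar> < l"
    and start: "q + l / 2 < y t0"
  shows "y \<longlonglongrightarrow> q + l"
proof -
  have "0 \<le> \<bar>y (Suc t0) - y t0\<bar>" by simp
  then have l: "0 < l" using small_steps[of t0] by linarith
  have above: "q + l / 2 < y t" if "t0 \<le> t" for t
    using that
  proof (induction t rule: dec_induct)
    case (step t)
    have far: "l / 2 < \<bar>y (Suc t) - q\<bar>" using small_steps[of "Suc t"] step.hyps by simp
    have "\<bar>y (Suc t) - y t\<bar> < l" using small_steps[of t] step.hyps by simp
    then have "y t - l < y (Suc t)" by (simp add: abs_less_iff)
    then show ?case using far step.IH by (cases "0 \<le> y (Suc t) - q") auto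
  qed (rule start)
  have "\<forall>\<^sub>F t in sequentially. \<bar>y t - q\<bar> = y t - q"
    unfolding eventually_sequentially
  proof (intro exI[of _ t0] allI impI)
    fix t assume "t0 \<le> t"
    then have "0 < y t - q" using above[of t] l by linarith
    then show "\<bar>y t - q\<bar> = y t - q" by simp
  qed
  then have "(\<lambda>t. y t - q) \<longlonglongrightarrow> l" by (rule Lim_transform_eventually[OF dist])
  then have "(\<lambda>t. (y t - q) + q) \<longlonglongrightarrow> l + q" by (intro tendsto_add tendsto_const)
  then show ?thesis by (simp add: add.commute)
qed

text \<open>Between two far-apart sides of \<open>q\<close> the sequence would have to jump, so once the
  steps are small, \<open>y\<close> stays on one side of \<open>q\<close> and \<open>y - q\<close> or \<open>q - y\<close> converges.\<close>

lemma convergent_if_dist_convergent: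
  fixes y :: "nat \<Rightarrow> real"
  assumes dist: "(\<lambda>t. \<bar>y t - q\<bar>) \<longlonglongrightarrow> l" and steps: "(\<lambda>t. y (Suc t) - y t) \<longlonglongrightarrow> 0"
  shows "convergent y"
proof (cases "l = 0")
  case True
  then show ?thesis using dist unfolding convergent_def
    by (metis LIM_zero_iff tendsto_rabs_zero_iff)
next
  case False
  moreover have "0 \<le> l" by (rule tendsto_lowerbound[OF dist]) auto
  ultimately have l: "0 < l" by simp
  have "\<forall>\<^sub>F t in sequentially. l / 2 < \<bar>y t - q\<bar> \<and> \<bar>y (Suc t) - y t\<bar> < l"
    using order_tendstoD(1)[OF dist, of "l / 2"] order_tendstoD(2)[OF tendsto_rabs[OF steps], of l] l
    by (auto elim: eventually_elim2)
  then obtain t0 where t0: "\<And>t. t0 \<le> t \<Longrightarrow> l / 2 < \<bar>y t - q\<bar> \<and> \<bar>y (Suc t) - y t\<bar> < l"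
    by (auto simp: eventually_sequentially)
  consider "q + l / 2 < y t0" | "- q + l / 2 < - y t0" using t0[of t0]
    by (cases "0 \<le> y t0 - q") auto
  then show ?thesis
  proof cases
    case 1
    have "y \<longlonglongrightarrow> q + l" by (rule tendsto_if_dist_tendsto_from_above[OF dist t0 1])
    then show ?thesis by (auto simp: convergent_def)
  next
    case 2
    have "(\<lambda>t. - y t) \<longlonglongrightarrow> - q + l"
    proof (rule tendsto_if_dist_tendsto_from_above[of "\<lambda>t. - y t" "- q" l t0])
      show "(\<lambda>t. \<bar>- y t - - q\<bar>) \<longlonglongrightarrow> l" using dist by (simp add: abs_minus_commute)
      show "l / 2 < \<bar>- y t - - q\<bar> \<and> \<bar>- y (Suc t) - - y t\<bar> < l" if "t0 \<le> t" for t
        using t0[OF that] by (simp add: abs_minus_commute)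
    qed (use 2 in simp)
    then have "(\<lambda>t. - (- y t)) \<longlonglongrightarrow> - (- q + l)" by (rule tendsto_minus)
    then show ?thesis by (auto simp: convergent_def)
  qed
qed

lemma growing_set_fills:
  assumes N: "finite N" "card N \<le> n" and sub: "\<And>u. S u \<subseteq> N" and mono: "\<And>u. S u \<subseteq> S (Suc u)"
    and grow: "\<And>u. u < n \<Longrightarrow> S u \<noteq> N \<Longrightarrow> S u \<subset> S (Suc u)"
  shows "S n = N"
proof -
  have fin: "finite (S u)" for u using finite_subset[OF sub N(1)] .
  have "S u = N \<or> u \<le> card (S u)" if "u \<le> n" for u
    using that
  proof (induction u)
    case (Suc u)
    show ?case
    proof (cases "S (Suc u) = N")
      case False
      then have "S u \<noteq> N" using mono[of u] sub[of "Suc u"] by auto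
      moreover have "u < n" using Suc.prems by simp
      ultimately have "u \<le> card (S u)" "card (S u) < card (S (Suc u))"
        using Suc.IH psubset_card_mono[OF fin grow] by auto
      then show ?thesis by simp
    qed simp
  qed simp
  then have "S n = N \<or> n \<le> card (S n)" by simp
  moreover have "card (S n) \<le> card N" using card_mono[OF N(1) sub[of n]] .
  ultimately show ?thesis using card_subset_eq[OF N(1) sub[of n]] N(2) by linarith
qed

lemma growing_cover_fills:
  assumes N: "finite N" "card N \<le> n" and sub: "\<And>u. Lo u \<subseteq> N" "\<And>u. Hi u \<subseteq> N"
    and cover: "Lo 0 \<union> Hi 0 = N" and mono: "\<And>u. Lo u \<subseteq> Lo (Suc u)" "\<And>u. Hi u \<subseteq> Hi (Suc u)"
    and grow: "\<And>u. Lo u \<noteq> N \<Longrightarrow> Hi u \<noteq> N \<Longrightarrow> Lo u \<subset> Lo (Suc u) \<or> Hi u \<subset> Hi (Suc u)"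
  shows "Lo n = N \<or> Hi n = N"
proof -
  have fin: "finite (Lo u)" "finite (Hi u)" for u
    using finite_subset[OF sub(1) N(1)] finite_subset[OF sub(2) N(1)] by auto
  have count: "Lo u = N \<or> Hi u = N \<or> card N + u \<le> card (Lo u) + card (Hi u)" for u
  proof (induction u)
    case 0
    show ?case using card_Un_le[of "Lo 0" "Hi 0"] cover by simp
  next
    case (Suc u)
    show ?case
    proof (cases "Lo (Suc u) = N \<or> Hi (Suc u) = N")
      case False
      then have "Lo u \<noteq> N" "Hi u \<noteq> N"
        using mono(1)[of u] mono(2)[of u] sub(1)[of "Suc u"] sub(2)[of "Suc u"] by blast+
      then have IH: "card N + u \<le> card (Lo u) + card (Hi u)" using Suc.IH by blast
      have le: "card (Lo u) \<le> card (Lo (Suc u))" "card (Hi u) \<le> card (Hi (Suc u))"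
        using card_mono[OF fin(1) mono(1)] card_mono[OF fin(2) mono(2)] by auto
      from grow[OF \<open>Lo u \<noteq> N\<close> \<open>Hi u \<noteq> N\<close>]
      have "card (Lo u) + card (Hi u) < card (Lo (Suc u)) + card (Hi (Suc u))"
      proof
        assume "Lo u \<subset> Lo (Suc u)"
        from psubset_card_mono[OF fin(1) this] show ?thesis using le(2) by linarith
      next
        assume "Hi u \<subset> Hi (Suc u)"
        from psubset_card_mono[OF fin(2) this] show ?thesis using le(1) by linarith
      qed
      then show ?thesis using IH by (intro disjI2) linarith
    qed blast
  qed
  show ?thesis
  proof (rule ccontr)
    assume neither: "\<not> ?thesis"
    then have "Lo n \<subset> N" "Hi n \<subset> N" using sub by auto
    then have "card (Lo n) < card N" "card (Hi n) < card N" using psubset_card_mono[OF N(1)] by auto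
    moreover have "card N + n \<le> card (Lo n) + card (Hi n)" using count[of n] neither by auto
    ultimately show False using N(2) by linarith
  qed
qed

lemma sum_decseq_le_samples:
  fixes \<alpha> :: "nat \<Rightarrow> real"
  assumes "decseq \<alpha>"
  shows "(\<Sum>t<t0 + Suc b * T. \<alpha> t) \<le> (\<Sum>t<t0 + T. \<alpha> t) + real T * (\<Sum>b'<b. \<alpha> (t0 + Suc b' * T))"
proof (induction b)
  case (Suc b)
  define m where "m = t0 + Suc b * T"
  have "(\<Sum>t<m + T. \<alpha> t) = (\<Sum>t<m. \<alpha> t) + (\<Sum>t\<in>{m..<m + T}. \<alpha> t)"
    using sum.atLeastLessThan_concat[of 0 m "m + T" \<alpha>] by (simp add: atLeast0LessThan)
  moreover have "(\<Sum>t\<in>{m..<m + T}. \<alpha> t) \<le> real T * \<alpha> m"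
    using sum_bounded_above[of "{m..<m + T}" \<alpha> "\<alpha> m"] decseqD[OF assms] by simp
  ultimately have "(\<Sum>t<m + T. \<alpha> t)
      \<le> (\<Sum>t<t0 + T. \<alpha> t) + real T * (\<Sum>b'<b. \<alpha> (t0 + Suc b' * T)) + real T * \<alpha> m"
    using Suc.IH unfolding m_def by linarith
  moreover have "t0 + Suc (Suc b) * T = m + T" by (simp add: m_def)
  ultimately have "(\<Sum>t<t0 + Suc (Suc b) * T. \<alpha> t)
      \<le> (\<Sum>t<t0 + T. \<alpha> t) + real T * (\<Sum>b'<b. \<alpha> (t0 + Suc b' * T)) + real T * \<alpha> m"
    by (simp only:)
  also have "\<dots> = (\<Sum>t<t0 + T. \<alpha> t) + real T * (\<Sum>b'<Suc b. \<alpha> (t0 + Suc b' * T))"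
    by (simp add: m_def distrib_left)
  finally show ?case .
qed simp

lemma sum_samples_unbounded:
  fixes \<alpha> :: "nat \<Rightarrow> real"
  assumes "decseq \<alpha>" "\<And>t. 0 \<le> \<alpha> t" "filterlim (\<lambda>M. \<Sum>t<M. \<alpha> t) at_top sequentially" "0 < T"
  shows "\<exists>b. K < (\<Sum>b'<b. \<alpha> (t0 + Suc b' * T))"
proof (rule ccontr)
  assume "\<not> ?thesis"
  then have samples: "(\<Sum>b'<b. \<alpha> (t0 + Suc b' * T)) \<le> K" for b by (simp add: not_less)
  have bound: "(\<Sum>t<M. \<alpha> t) \<le> (\<Sum>t<t0 + T. \<alpha> t) + real T * K" for M
  proof -
    have "(\<Sum>t<M. \<alpha> t) \<le> (\<Sum>t<t0 + Suc M * T. \<alpha> t)"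
      using assms(2,4) by (intro sum_mono2) (auto simp: less_imp_le_nat le_trans[OF _ le_add2])
    also have "\<dots> \<le> (\<Sum>t<t0 + T. \<alpha> t) + real T * (\<Sum>b'<M. \<alpha> (t0 + Suc b' * T))"
      by (rule sum_decseq_le_samples[OF assms(1)])
    also have "\<dots> \<le> (\<Sum>t<t0 + T. \<alpha> t) + real T * K"
      using mult_left_mono[OF samples[of M], of "real T"] by simp
    finally show ?thesis .
  qed
  have "\<forall>\<^sub>F M in sequentially. (\<Sum>t<t0 + T. \<alpha> t) + real T * K + 1 \<le> (\<Sum>t<M. \<alpha> t)"
    using assms(3) by (simp add: filterlim_at_top)
  then obtain M where "(\<Sum>t<t0 + T. \<alpha> t) + real T * K + 1 \<le> (\<Sum>t<M. \<alpha> t)"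
    by (auto simp: eventually_sequentially)
  then show False using bound[of M] by simp
qed

section \<open>Convexity and subgradients\<close>

lemma lipschitz_on_sum:
  fixes g :: "'i \<Rightarrow> 'a::metric_space \<Rightarrow> 'b::real_normed_vector"
  assumes "finite I" "\<And>j. j \<in> I \<Longrightarrow> (C j)-lipschitz_on U (g j)"
  shows "(\<Sum>j\<in>I. C j)-lipschitz_on U (\<lambda>y. \<Sum>j\<in>I. g j y)"
  using assms
proof (induction I rule: finite_induct)
  case empty
  show ?case using lipschitz_on_constant[of U 0] by simp
next
  case (insert j I)
  then show ?case by (simp add: lipschitz_on_add)
qed

lemma convex_combination_lipschitz:
  fixes h :: "nat \<Rightarrow> real \<Rightarrow> real" and w :: "nat \<Rightarrow> real"
  assumes "\<forall>j\<in>{1..k}. L-lipschitz_on UNIV (h j)" "\<forall>j\<in>{1..k}. 0 \<le> w j" "(\<Sum>j=1..k. w j) = 1"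
  shows "L-lipschitz_on UNIV (\<lambda>y. \<Sum>j=1..k. w j * h j y)"
proof -
  have "(\<Sum>j=1..k. w j * L)-lipschitz_on UNIV (\<lambda>y. \<Sum>j=1..k. w j * h j y)"
    using assms(1,2) by (intro lipschitz_on_sum lipschitz_on_cmult_real_nonneg) auto
  then show ?thesis using assms(3) by (simp add: sum_distrib_right[symmetric])
qed

lemma subgradient_descent: "subgradient g x d \<Longrightarrow> g x - g z \<le> d * (x - z)"
  unfolding subgradient_def by (drule spec[of _ z]) (simp add: algebra_simps)

lemma subgradient_abs_le:
  assumes sg: "subgradient g x d" and lip: "L-lipschitz_on UNIV g"
  shows "\<bar>d\<bar> \<le> L"
proof -
  have "d * s \<le> L" if "\<bar>s\<bar> = 1" for s
  proof -
    have "d * s \<le> g (x + s) - g x" using subgradient_descent[OF sg, of "x + s"] by simp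
    also have "\<dots> \<le> L * \<bar>s\<bar>" using lipschitz_onD[OF lip, of "x + s" x] by (simp add: dist_real_def)
    finally show ?thesis using that by simp
  qed
  from this[of 1] this[of "- 1"] show ?thesis by (simp add: abs_le_iff)
qed

lemma convex_argmin_set:
  assumes "convex_on UNIV h"
  shows "convex (argmin_set h)"
proof (rule convexI)
  fix y z :: real and u v :: real
  assume y: "y \<in> argmin_set h" and z: "z \<in> argmin_set h" and uv: "0 \<le> u" "0 \<le> v" "u + v = 1"
  have "h (u *\<^sub>R y + v *\<^sub>R z) \<le> max (h y) (h z)" by (rule convex_lower[OF assms _ _ uv]) auto
  moreover have "max (h y) (h z) \<le> h w" for w using y z by (simp add: argmin_set_def)
  ultimately show "u *\<^sub>R y + v *\<^sub>R z \<in> argmin_set h" unfolding argmin_set_def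
    by (blast intro: order_trans)
qed

lemma common_minimizer_argmin_average:
  assumes "\<forall>j\<in>{1..k}. w \<in> argmin_set (h j)"
  shows "w \<in> argmin_set (\<lambda>y. (1 / real k) * (\<Sum>j=1..k. h j y))"
  unfolding argmin_set_def
proof (intro CollectI allI)
  fix y
  have "(\<Sum>j=1..k. h j w) \<le> (\<Sum>j=1..k. h j y)" using assms
    by (intro sum_mono) (simp add: argmin_set_def)
  then show "1 / real k * (\<Sum>j=1..k. h j w) \<le> 1 / real k * (\<Sum>j=1..k. h j y)"
    by (rule mult_left_mono) simp
qed

section \<open>Consensus dynamics\<close>

text \<open>Iteration \<open>t + 1\<close> of Algorithm 2 at honest agent \<open>i\<close>: \<open>a i t\<close> is its trimmed mean and \<open>d i t\<close>
  the subgradient used at \<open>x i t\<close>.\<close>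

locale consensus_dynamics =
  fixes N :: "nat set" and E :: "(nat \<times> nat) set" and f n :: nat and \<alpha> :: "nat \<Rightarrow> real" and L :: real
    and x a d :: "nat \<Rightarrow> nat \<Rightarrow> real"
  assumes finite_N: "finite N" and N_nonempty: "N \<noteq> {}" and card_N: "card N \<le> n"
    and update: "\<And>i t. i \<in> N \<Longrightarrow> x i (Suc t) = a i t - \<alpha> t * d i t"
    and averaging_up: "\<And>i t. i \<in> N \<Longrightarrow> averaging_step N E f n (\<lambda>j. x j t) (a i t) i"
    and averaging_down: "\<And>i t. i \<in> N \<Longrightarrow> averaging_step N E f n (\<lambda>j. - x j t) (- a i t) i"
    and d_bounded: "\<And>i t. i \<in> N \<Longrightarrow> \<bar>d i t\<bar> \<le> L"
    and covers_expand: "\<And>Lo Hi. Lo \<union> Hi = N \<Longrightarrow> Lo \<subset> N \<Longrightarrow> Hi \<subset> N \<Longrightarrow>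
      expandable N E f Lo \<or> expandable N E f Hi"
    and alpha_nonneg: "\<And>t. 0 \<le> \<alpha> t" and alpha_decseq: "decseq \<alpha>"
    and alpha_square_summable: "summable (\<lambda>t. (\<alpha> t)\<^sup>2)"
    and alpha_divergent: "filterlim (\<lambda>M. \<Sum>t<M. \<alpha> t) at_top sequentially"
begin

lemma negated_dynamics: "consensus_dynamics N E f n \<alpha> L (\<lambda>i t. - x i t) (\<lambda>i t. - a i t) (\<lambda>i t. - d i t)"
  using finite_N N_nonempty card_N covers_expand alpha_nonneg alpha_decseq alpha_square_summable
    alpha_divergent
  by unfold_locales (simp_all add: update averaging_up averaging_down d_bounded)

lemma L_nonneg: "0 \<le> L"
  using d_bounded N_nonempty by (meson abs_ge_zero all_not_in_conv order_trans)

lemma abs_step_le: "i \<in> N \<Longrightarrow> \<bar>\<alpha> t * d i t\<bar> \<le> L * \<alpha> t"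
  using mult_left_mono[OF d_bounded[of i t] alpha_nonneg[of t]] alpha_nonneg[of t]
  by (simp add: abs_mult mult.commute)

lemma average_le: "\<forall>j\<in>N. x j t \<le> C \<Longrightarrow> i \<in> N \<Longrightarrow> a i t \<le> C"
  using averaging_step_le_max[OF averaging_up] by blast

lemma average_le_pulled:
  assumes "S \<subseteq> N" "\<forall>j\<in>S. x j t \<le> C - e" "\<forall>j\<in>N. x j t \<le> C" "0 \<le> e" "i \<in> N"
    "i \<in> S \<or> influenced_by E f S i"
  shows "a i t \<le> C - e / (real n + 1)"
  using averaging_stepD[OF averaging_up[OF assms(5)] assms(1,2,3) _ assms(6)] assms(4) by simp

lemma next_le: "\<forall>j\<in>N. x j t \<le> C \<Longrightarrow> i \<in> N \<Longrightarrow> x i (Suc t) \<le> C + L * \<alpha> t"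
  using average_le[of t C i] update[of i t] abs_step_le[of i t] by (simp add: abs_le_iff)

lemma next_le_pulled:
  assumes "S \<subseteq> N" "\<forall>j\<in>S. x j t \<le> C - e" "\<forall>j\<in>N. x j t \<le> C" "0 \<le> e" "i \<in> N"
    "i \<in> S \<or> influenced_by E f S i"
  shows "x i (Suc t) \<le> C + L * \<alpha> t - e / (real n + 1)"
  using average_le_pulled[OF assms] update[of i t] abs_step_le[of i t] assms(5)
    by (simp add: abs_le_iff)

definition xmax :: "nat \<Rightarrow> real" where
  "xmax t = Max ((\<lambda>i. x i t) ` N)"

definition xmin :: "nat \<Rightarrow> real" where
  "xmin t = Min ((\<lambda>i. x i t) ` N)"

definition spread :: "nat \<Rightarrow> real" where
  "spread t = xmax t - xmin t"

lemma x_le_xmax: "i \<in> N \<Longrightarrow> x i t \<le> xmax t"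
  unfolding xmax_def using finite_N by simp

lemma xmin_le_x: "i \<in> N \<Longrightarrow> xmin t \<le> x i t"
  unfolding xmin_def using finite_N by simp

lemma xmax_le: "\<forall>i\<in>N. x i t \<le> C \<Longrightarrow> xmax t \<le> C"
  unfolding xmax_def using finite_N N_nonempty by simp

lemma xmin_ge: "\<forall>i\<in>N. C \<le> x i t \<Longrightarrow> C \<le> xmin t"
  unfolding xmin_def using finite_N N_nonempty by simp

lemma spread_nonneg: "0 \<le> spread t"
  using N_nonempty x_le_xmax xmin_le_x unfolding spread_def
    by (meson all_not_in_conv diff_ge_0_iff_ge order_trans)

lemma dist_le_spread: "i \<in> N \<Longrightarrow> j \<in> N \<Longrightarrow> \<bar>x i t - x j t\<bar> \<le> spread t"
  using x_le_xmax xmin_le_x unfolding spread_def by (smt (verit))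

lemma a_dist_le_spread:
  assumes i: "i \<in> N"
  shows "\<bar>a i t - x i t\<bar> \<le> spread t"
proof -
  have "a i t \<le> xmax t" using average_le x_le_xmax i by blast
  moreover have "- a i t \<le> - xmin t"
    using consensus_dynamics.average_le[OF negated_dynamics, of t "- xmin t" i] xmin_le_x i by simp
  ultimately show ?thesis using x_le_xmax[OF i, of t] xmin_le_x[OF i, of t] unfolding spread_def
    by (simp add: abs_le_iff)
qed

definition drift :: "nat \<Rightarrow> nat \<Rightarrow> real" where
  "drift s u = L * (\<Sum>v<u. \<alpha> (s + v))"

lemma drift_Suc: "drift s (Suc u) = drift s u + L * \<alpha> (s + u)"
  unfolding drift_def by (simp add: distrib_left)

lemma drift_le: "drift s u \<le> real u * L * \<alpha> s"
proof -
  have "(\<Sum>v<u. \<alpha> (s + v)) \<le> real u * \<alpha> s"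
    using sum_bounded_above[of "{..<u}" "\<lambda>v. \<alpha> (s + v)" "\<alpha> s"] decseqD[OF alpha_decseq] by simp
  then show ?thesis unfolding drift_def using L_nonneg
    by (simp add: mult_left_mono mult.assoc mult.left_commute)
qed

lemma le_xmax_plus_drift: "\<forall>i\<in>N. x i (s + u) \<le> xmax s + drift s u"
proof (induction u)
  case 0
  show ?case using x_le_xmax by (simp add: drift_def)
next
  case (Suc u)
  show ?case using next_le[OF Suc] by (simp add: drift_Suc add.assoc)
qed

lemma xmin_minus_drift_le: "\<forall>i\<in>N. - x i (s + u) \<le> - (xmin s - drift s u)"
proof (induction u)
  case 0
  show ?case using xmin_le_x by (simp add: drift_def)
next
  case (Suc u)
  show ?case using consensus_dynamics.next_le[OF negated_dynamics Suc]
    by (simp add: drift_Suc algebra_simps)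
qed

text \<open>Two sets of agents, those well below the current maximum and those well above the current
  minimum, cover \<open>N\<close>; every step one of them absorbs a new agent while the margin shrinks by the
  factor \<open>n + 1\<close>. After \<open>n\<close> steps one of them is all of \<open>N\<close>.\<close>

lemma one_side_contracts:
  fixes s :: nat
  defines "e \<equiv> \<lambda>u. spread s / 2 / (real n + 1) ^ u"
  shows "(\<forall>i\<in>N. x i (s + n) \<le> xmax s + drift s n - e n) \<or> (\<forall>i\<in>N. xmin s - drift s n + e n \<le> x i (s + n))"
proof -
  define Lo where "Lo u = {i \<in> N. x i (s + u) \<le> xmax s + drift s u - e u}" for u
  define Hi where "Hi u = {i \<in> N. xmin s - drift s u + e u \<le> x i (s + u)}" for u
  have e_nonneg: "0 \<le> e u" for u using spread_nonneg[of s] unfolding e_def by simp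
  have e_Suc: "e (Suc u) = e u / (real n + 1)" for u unfolding e_def by (simp add: field_simps)
  have Lo_grows: "i \<in> Lo (Suc u)" if "i \<in> N" "i \<in> Lo u \<or> influenced_by E f (Lo u) i" for i u
    using next_le_pulled[of "Lo u" "s + u" "xmax s + drift s u" "e u", OF _ _ le_xmax_plus_drift e_nonneg that]
      that(1)
    by (auto simp: Lo_def drift_Suc e_Suc algebra_simps)
  have Hi_grows: "i \<in> Hi (Suc u)" if "i \<in> N" "i \<in> Hi u \<or> influenced_by E f (Hi u) i" for i u
    using consensus_dynamics.next_le_pulled[OF negated_dynamics, of "Hi u" "s + u" "- (xmin s - drift s u)" "e u",
        OF _ _ xmin_minus_drift_le e_nonneg that] that(1)
    by (auto simp: Hi_def drift_Suc e_Suc algebra_simps)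
  have Lo_mono: "Lo u \<subseteq> Lo (Suc u)" for u using Lo_grows by (auto simp: Lo_def)
  have Hi_mono: "Hi u \<subseteq> Hi (Suc u)" for u using Hi_grows by (auto simp: Hi_def)
  have cover0: "Lo 0 \<union> Hi 0 = N"
  proof -
    have "xmax s + drift s 0 - e 0 = xmin s - drift s 0 + e 0"
      unfolding drift_def e_def spread_def by (simp add: field_simps)
    then show ?thesis unfolding Lo_def Hi_def by auto
  qed
  have cover: "Lo u \<union> Hi u = N" for u
    using cover0 lift_Suc_mono_le[of Lo, OF Lo_mono, of 0 u] lift_Suc_mono_le[of Hi, OF Hi_mono, of 0 u]
    by (auto simp: Lo_def Hi_def)
  have "Lo n = N \<or> Hi n = N"
  proof (rule growing_cover_fills[OF finite_N card_N _ _ cover0 Lo_mono Hi_mono])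
    fix u assume "Lo u \<noteq> N" "Hi u \<noteq> N"
    then have "Lo u \<subset> N" "Hi u \<subset> N" by (auto simp: Lo_def Hi_def)
    then have "expandable N E f (Lo u) \<or> expandable N E f (Hi u)" using covers_expand cover by blast
    then show "Lo u \<subset> Lo (Suc u) \<or> Hi u \<subset> Hi (Suc u)"
      using Lo_grows Hi_grows Lo_mono Hi_mono unfolding expandable_def by blast
  qed (auto simp: Lo_def Hi_def)
  then show ?thesis unfolding Lo_def Hi_def by blast
qed

lemma spread_contraction:
  "spread (s + n) \<le> (1 - 1 / (2 * (real n + 1) ^ n)) * spread s + 2 * real n * L * \<alpha> s"
proof -
  define e where "e = spread s / 2 / (real n + 1) ^ n"
  have "xmax (s + n) \<le> xmax s + drift s n - e \<or> xmin s - drift s n + e \<le> xmin (s + n)"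
    using one_side_contracts[of s] xmax_le xmin_ge unfolding e_def by blast
  moreover have "xmax (s + n) \<le> xmax s + drift s n" using le_xmax_plus_drift by (rule xmax_le)
  moreover have "xmin s - drift s n \<le> xmin (s + n)" using xmin_minus_drift_le[of s n]
    by (intro xmin_ge) auto
  ultimately have "spread (s + n) \<le> spread s + 2 * drift s n - e" unfolding spread_def by auto
  moreover have "spread s - e = (1 - 1 / (2 * (real n + 1) ^ n)) * spread s"
    unfolding e_def by (simp add: field_simps)
  ultimately show ?thesis using drift_le[of s n] by linarith
qed

lemma n_pos: "1 \<le> n"
  using card_N N_nonempty finite_N by (metis One_nat_def Suc_leI card_gt_0_iff le_trans)

lemma alpha_tendsto_zero: "\<alpha> \<longlonglongrightarrow> 0"
proof -
  have "(\<lambda>t. sqrt ((\<alpha> t)\<^sup>2)) \<longlonglongrightarrow> sqrt 0"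
    by (intro tendsto_real_sqrt summable_LIMSEQ_zero[OF alpha_square_summable])
  then show ?thesis using alpha_nonneg by simp
qed

lemma contraction_factor: "0 \<le> 1 - 1 / (2 * (real n + 1) ^ n)" "1 - 1 / (2 * (real n + 1) ^ n) < 1"
proof -
  have "1 \<le> (real n + 1) ^ n" by (simp add: one_le_power)
  then have "1 \<le> 2 * (real n + 1) ^ n" by linarith
  then show "0 \<le> 1 - 1 / (2 * (real n + 1) ^ n)" "1 - 1 / (2 * (real n + 1) ^ n) < 1"
    by simp_all
qed

lemma spread_tendsto_zero: "spread \<longlonglongrightarrow> 0"
proof (rule periodic_contraction_tendsto_zero[where T = n and l = "1 - 1 / (2 * (real n + 1) ^ n)"])
  show "(\<lambda>s. 2 * real n * L * \<alpha> s) \<longlonglongrightarrow> 0"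
    using tendsto_mult_left[OF alpha_tendsto_zero, of "2 * real n * L"] by simp
qed (use spread_nonneg contraction_factor n_pos spread_contraction in auto)

lemma alpha_spread_summable: "summable (\<lambda>t. \<alpha> t * spread t)"
proof (rule periodic_contraction_summable[OF _ _ _ contraction_factor])
  show "0 \<le> \<alpha> t * spread t" for t using alpha_nonneg spread_nonneg by simp
  show "0 \<le> 2 * real n * L * (\<alpha> t)\<^sup>2" for t using L_nonneg by simp
  show "summable (\<lambda>t. 2 * real n * L * (\<alpha> t)\<^sup>2)" by (intro summable_mult alpha_square_summable)
  show "\<alpha> (s + n) * spread (s + n)
      \<le> (1 - 1 / (2 * (real n + 1) ^ n)) * (\<alpha> s * spread s) + 2 * real n * L * (\<alpha> s)\<^sup>2" for s
  proof -
    have "\<alpha> (s + n) * spread (s + n) \<le> \<alpha> s * spread (s + n)"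
      using decseqD[OF alpha_decseq, of s "s + n"] spread_nonneg by (simp add: mult_right_mono)
    also have "\<dots> \<le> \<alpha> s * ((1 - 1 / (2 * (real n + 1) ^ n)) * spread s + 2 * real n * L * \<alpha> s)"
      using spread_contraction alpha_nonneg by (rule mult_left_mono)
    also have "\<dots> = (1 - 1 / (2 * (real n + 1) ^ n)) * (\<alpha> s * spread s) + 2 * real n * L * (\<alpha> s)\<^sup>2"
      by (simp add: power2_eq_square distrib_left mult.commute mult.left_commute)
    finally show ?thesis .
  qed
qed

lemma steps_tendsto_zero:
  assumes i: "i \<in> N"
  shows "(\<lambda>t. x i (Suc t) - x i t) \<longlonglongrightarrow> 0"
proof (rule Lim_null_comparison)
  have "norm (x i (Suc t) - x i t) \<le> spread t + L * \<alpha> t" for t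
    using a_dist_le_spread[OF i, of t] abs_step_le[OF i, of t] update[OF i, of t]
      by (simp add: abs_le_iff)
  then show "\<forall>\<^sub>F t in sequentially. norm (x i (Suc t) - x i t) \<le> spread t + L * \<alpha> t"
    by (simp add: always_eventually)
  show "(\<lambda>t. spread t + L * \<alpha> t) \<longlonglongrightarrow> 0"
    using tendsto_add[OF spread_tendsto_zero tendsto_mult_left[OF alpha_tendsto_zero, of L]] by simp
qed

text \<open>While the subgradients are nonnegative, the trimmed means never exceed the previous maximum,
  and the agents of \<open>S0\<close> drop by at least \<open>\<delta> \<alpha>\<close>; this drop then spreads through the
  expandable supersets of \<open>S0\<close>, losing a factor \<open>n + 1\<close> per step.\<close>

lemma descent_block:
  assumes S0: "S0 \<subseteq> N" and expand: "\<And>S. S0 \<subseteq> S \<Longrightarrow> S \<subset> N \<Longrightarrow> expandable N E f S" and \<delta>: "0 < \<delta>"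
    and d_nonneg: "\<And>i t. t0 \<le> t \<Longrightarrow> i \<in> N \<Longrightarrow> 0 \<le> d i t"
    and d_large: "\<And>i t. t0 \<le> t \<Longrightarrow> i \<in> S0 \<Longrightarrow> \<delta> \<le> d i t"
    and below: "\<forall>i\<in>N. x i t0 \<le> B"
  shows "\<forall>i\<in>N. x i (t0 + Suc n) \<le> B - \<delta> * \<alpha> (t0 + Suc n) / (real n + 1) ^ n"
proof -
  define \<gamma> where "\<gamma> = \<delta> * \<alpha> (t0 + Suc n)"
  define \<eta> where "\<eta> u = \<gamma> / (real n + 1) ^ u" for u
  define S where "S u = {i \<in> N. x i (t0 + Suc u) \<le> B - \<eta> u}" for u
  have \<gamma>_nonneg: "0 \<le> \<gamma>" using \<delta> alpha_nonneg unfolding \<gamma>_def by simp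
  then have \<eta>_nonneg: "0 \<le> \<eta> u" and \<eta>_le: "\<eta> u \<le> \<gamma>" for u
    unfolding \<eta>_def by (simp_all add: divide_le_eq one_le_power mult_le_cancel_left1)
  have \<eta>_Suc: "\<eta> (Suc u) = \<eta> u / (real n + 1)" for u unfolding \<eta>_def by (simp add: field_simps)
  have x_le_a: "x i (Suc t) \<le> a i t" if "t0 \<le> t" "i \<in> N" for i t
    using update[OF that(2)] d_nonneg[OF that] alpha_nonneg[of t] by simp
  have x_le_a_\<gamma>: "x i (Suc t) \<le> a i t - \<gamma>" if "t0 \<le> t" "t \<le> t0 + n" "i \<in> S0" for i t
  proof -
    have "\<alpha> (t0 + Suc n) \<le> \<alpha> t" using decseqD[OF alpha_decseq] that(2) by simp
    then have "\<alpha> (t0 + Suc n) * \<delta> \<le> \<alpha> t * d i t"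
      using d_large[OF that(1,3)] \<delta> alpha_nonneg by (intro mult_mono) auto
    then show ?thesis using update[of i t] that S0 unfolding \<gamma>_def by (auto simp: mult.commute)
  qed
  have bounded: "\<forall>i\<in>N. x i (t0 + u) \<le> B" for u
  proof (induction u)
    case (Suc u)
    show ?case
    proof
      fix i assume i: "i \<in> N"
      have "x i (Suc (t0 + u)) \<le> a i (t0 + u)" by (rule x_le_a) (simp_all add: i)
      also have "\<dots> \<le> B" using average_le[OF Suc i] .
      finally show "x i (t0 + Suc u) \<le> B" by simp
    qed
  qed (simp add: below)
  have S0_sub: "S0 \<subseteq> S u" if "u \<le> n" for u
  proof
    fix i assume i: "i \<in> S0"
    have "x i (Suc (t0 + u)) \<le> a i (t0 + u) - \<gamma>" using x_le_a_\<gamma>[of "t0 + u" i] that i by simp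
    moreover have "a i (t0 + u) \<le> B" using average_le[OF bounded] i S0 by blast
    ultimately show "i \<in> S u" using \<eta>_le[of u] i S0 by (auto simp: S_def)
  qed
  have grows: "i \<in> S (Suc u)" if "i \<in> N" "i \<in> S u \<or> influenced_by E f (S u) i" for i u
  proof -
    have "a i (t0 + Suc u) \<le> B - \<eta> u / (real n + 1)"
      by (rule average_le_pulled[OF _ _ bounded \<eta>_nonneg that]) (auto simp: S_def)
    then show ?thesis using x_le_a[of "t0 + Suc u" i] that(1) \<eta>_Suc[of u] by (auto simp: S_def)
  qed
  have "S n = N"
  proof (rule growing_set_fills[OF finite_N card_N])
    show "S u \<subseteq> N" for u by (auto simp: S_def)
    show "S u \<subseteq> S (Suc u)" for u using grows by (auto simp: S_def)
    fix u assume "u < n" "S u \<noteq> N"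
    then have "expandable N E f (S u)" using expand S0_sub[of u] by (auto simp: S_def)
    then show "S u \<subset> S (Suc u)" using grows unfolding expandable_def by (auto simp: S_def)
  qed
  then show ?thesis unfolding S_def \<eta>_def \<gamma>_def by auto
qed

lemma descent_iterated:
  assumes S0: "S0 \<subseteq> N" and expand: "\<And>S. S0 \<subseteq> S \<Longrightarrow> S \<subset> N \<Longrightarrow> expandable N E f S" and \<delta>: "0 < \<delta>"
    and d_nonneg: "\<And>i t. t0 \<le> t \<Longrightarrow> i \<in> N \<Longrightarrow> 0 \<le> d i t"
    and d_large: "\<And>i t. t0 \<le> t \<Longrightarrow> i \<in> S0 \<Longrightarrow> \<delta> \<le> d i t"
  shows "\<forall>i\<in>N. x i (t0 + b * Suc n)
    \<le> xmax t0 - \<delta> / (real n + 1) ^ n * (\<Sum>b'<b. \<alpha> (t0 + Suc b' * Suc n))"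
proof (induction b)
  case (Suc b)
  have "\<forall>i\<in>N. x i (t0 + b * Suc n + Suc n) \<le> xmax t0 - \<delta> / (real n + 1) ^ n * (\<Sum>b'<b. \<alpha> (t0 + Suc b' * Suc n))
      - \<delta> * \<alpha> (t0 + b * Suc n + Suc n) / (real n + 1) ^ n"
    by (rule descent_block[OF S0 expand \<delta> _ _ Suc]) (use d_nonneg d_large in auto)
  then show ?case by (simp add: algebra_simps)
qed (simp add: x_le_xmax)

lemma descent_unbounded:
  assumes S0: "S0 \<subseteq> N" and expand: "\<And>S. S0 \<subseteq> S \<Longrightarrow> S \<subset> N \<Longrightarrow> expandable N E f S" and \<delta>: "0 < \<delta>"
    and d_nonneg: "\<forall>\<^sub>F t in sequentially. \<forall>i\<in>N. 0 \<le> d i t"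
    and d_large: "\<forall>\<^sub>F t in sequentially. \<forall>i\<in>S0. \<delta> \<le> d i t"
  shows "\<not> (\<forall>\<^sub>F t in sequentially. \<forall>i\<in>N. c \<le> x i t)"
proof
  assume "\<forall>\<^sub>F t in sequentially. \<forall>i\<in>N. c \<le> x i t"
  with d_nonneg d_large have "\<forall>\<^sub>F t in sequentially.
      (\<forall>i\<in>N. 0 \<le> d i t) \<and> (\<forall>i\<in>S0. \<delta> \<le> d i t) \<and> (\<forall>i\<in>N. c \<le> x i t)"
    by (intro eventually_conj)
  then obtain t0 where t0: "\<And>t. t0 \<le> t \<Longrightarrow>
      (\<forall>i\<in>N. 0 \<le> d i t) \<and> (\<forall>i\<in>S0. \<delta> \<le> d i t) \<and> (\<forall>i\<in>N. c \<le> x i t)"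
    unfolding eventually_sequentially by blast
  define \<gamma> where "\<gamma> = \<delta> / (real n + 1) ^ n"
  have \<gamma>: "0 < \<gamma>" using \<delta> unfolding \<gamma>_def by simp
  obtain i0 where i0: "i0 \<in> N" using N_nonempty by blast
  obtain b where "(xmax t0 - c) / \<gamma> < (\<Sum>b'<b. \<alpha> (t0 + Suc b' * Suc n))"
    using sum_samples_unbounded[OF alpha_decseq alpha_nonneg alpha_divergent, of "Suc n"] by blast
  then have "xmax t0 - \<gamma> * (\<Sum>b'<b. \<alpha> (t0 + Suc b' * Suc n)) < c"
    using \<gamma> by (simp add: pos_divide_less_eq mult.commute)
  moreover have "x i0 (t0 + b * Suc n) \<le> xmax t0 - \<gamma> * (\<Sum>b'<b. \<alpha> (t0 + Suc b' * Suc n))"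
    using descent_iterated[OF S0 expand \<delta>, of t0 b] t0 i0 unfolding \<gamma>_def by blast
  moreover have "c \<le> x i0 (t0 + b * Suc n)" using t0[of "t0 + b * Suc n"] i0 by simp
  ultimately show False by linarith
qed

definition dist_max :: "real \<Rightarrow> nat \<Rightarrow> real" where
  "dist_max z t = Max ((\<lambda>i. \<bar>x i t - z\<bar>) ` N)"

lemma dist_le_dist_max: "i \<in> N \<Longrightarrow> \<bar>x i t - z\<bar> \<le> dist_max z t"
  unfolding dist_max_def using finite_N by simp

lemma dist_max_attained: "\<exists>i\<in>N. dist_max z t = \<bar>x i t - z\<bar>"
proof -
  have "dist_max z t \<in> (\<lambda>i. \<bar>x i t - z\<bar>) ` N"
    unfolding dist_max_def using finite_N N_nonempty by (intro Max_in) auto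
  then show ?thesis by auto
qed

lemma dist_max_nonneg: "0 \<le> dist_max z t"
  using dist_max_attained[of z t] by auto

lemma dist_max_step:
  assumes toward: "\<And>i t. i \<in> N \<Longrightarrow> 0 \<le> d i t * (x i t - z)"
  shows "(dist_max z (Suc t))\<^sup>2 \<le> (dist_max z t)\<^sup>2 + (2 * L * (\<alpha> t * spread t) + L\<^sup>2 * (\<alpha> t)\<^sup>2)"
proof -
  define U where "U = dist_max z t"
  obtain i where i: "i \<in> N" and max: "dist_max z (Suc t) = \<bar>x i (Suc t) - z\<bar>"
    using dist_max_attained by blast
  have "x j t \<le> z + U \<and> - x j t \<le> - (z - U)" if "j \<in> N" for j
    using dist_le_dist_max[OF that, of t z] unfolding U_def by (simp add: abs_le_iff)
  then have "\<forall>j\<in>N. x j t \<le> z + U" "\<forall>j\<in>N. - x j t \<le> - (z - U)" by auto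
  then have "a i t \<le> z + U" "- a i t \<le> - (z - U)"
    using average_le consensus_dynamics.average_le[OF negated_dynamics] i by blast+
  then have a_close: "(a i t - z)\<^sup>2 \<le> U\<^sup>2" by (simp add: abs_le_square_iff[symmetric] abs_le_iff)
  define P where "P = \<alpha> t * (d i t * (a i t - z))"
  have "- (L * spread t) \<le> d i t * (a i t - z)"
  proof -
    have "\<bar>d i t * (a i t - x i t)\<bar> \<le> L * spread t"
      unfolding abs_mult using d_bounded[OF i] a_dist_le_spread[OF i] L_nonneg
        by (intro mult_mono) auto
    moreover have "d i t * (a i t - z) = d i t * (x i t - z) + d i t * (a i t - x i t)"
      by (simp add: algebra_simps)
    ultimately show ?thesis using toward[OF i, of t] by (simp add: abs_le_iff)
  qed
  from mult_left_mono[OF this alpha_nonneg[of t]]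
  have cross: "- (L * (\<alpha> t * spread t)) \<le> P" unfolding P_def by (simp add: mult.left_commute)
  have "(d i t)\<^sup>2 \<le> L\<^sup>2" using d_bounded[OF i, of t] L_nonneg
    by (metis abs_le_square_iff abs_of_nonneg)
  from mult_right_mono[OF this zero_le_power2[of "\<alpha> t"]]
  have square: "(\<alpha> t)\<^sup>2 * (d i t)\<^sup>2 \<le> L\<^sup>2 * (\<alpha> t)\<^sup>2" by (simp only: mult.commute)
  have "(x i (Suc t) - z)\<^sup>2 = (a i t - z)\<^sup>2 - 2 * P + (\<alpha> t)\<^sup>2 * (d i t)\<^sup>2"
    unfolding update[OF i] P_def by (simp add: power2_eq_square algebra_simps)
  then show ?thesis using a_close cross square unfolding max U_def power2_abs by linarith
qed

lemma dist_max_convergent: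
  assumes toward: "\<And>i t. i \<in> N \<Longrightarrow> 0 \<le> d i t * (x i t - z)"
  shows "convergent (dist_max z)"
proof -
  have "convergent (\<lambda>t. (dist_max z t)\<^sup>2)"
  proof (rule almost_decreasing_convergent)
    show "(dist_max z (Suc t))\<^sup>2 \<le> (dist_max z t)\<^sup>2 + (2 * L * (\<alpha> t * spread t) + L\<^sup>2 * (\<alpha> t)\<^sup>2)" for t
      using toward by (rule dist_max_step)
    show "summable (\<lambda>t. 2 * L * (\<alpha> t * spread t) + L\<^sup>2 * (\<alpha> t)\<^sup>2)"
      by (intro summable_add summable_mult alpha_spread_summable alpha_square_summable)
  qed (use L_nonneg alpha_nonneg spread_nonneg in auto)
  then obtain l where "(\<lambda>t. (dist_max z t)\<^sup>2) \<longlonglongrightarrow> l" unfolding convergent_def by blast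
  then have "(\<lambda>t. sqrt ((dist_max z t)\<^sup>2)) \<longlonglongrightarrow> sqrt l" by (rule tendsto_real_sqrt)
  then show ?thesis using dist_max_nonneg unfolding convergent_def by auto
qed

lemma dist_convergent:
  assumes toward: "\<And>i t. i \<in> N \<Longrightarrow> 0 \<le> d i t * (x i t - z)" and i: "i \<in> N"
  shows "convergent (\<lambda>t. \<bar>x i t - z\<bar>)"
proof -
  obtain l where l: "dist_max z \<longlonglongrightarrow> l" using dist_max_convergent[OF toward] unfolding convergent_def
    by blast
  have "(\<lambda>t. \<bar>x i t - z\<bar> - dist_max z t) \<longlonglongrightarrow> 0"
  proof (rule Lim_null_comparison[OF _ spread_tendsto_zero])
    have "norm (\<bar>x i t - z\<bar> - dist_max z t) \<le> spread t" for t
    proof -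
      obtain j where j: "j \<in> N" "dist_max z t = \<bar>x j t - z\<bar>" using dist_max_attained by blast
      have "\<bar>x j t - z\<bar> \<le> \<bar>x j t - x i t\<bar> + \<bar>x i t - z\<bar>"
        using abs_triangle_ineq[of "x j t - x i t" "x i t - z"] by simp
      moreover have "\<bar>x j t - x i t\<bar> \<le> spread t" using dist_le_spread[OF j(1) i] .
      moreover have "\<bar>x i t - z\<bar> \<le> \<bar>x j t - z\<bar>" using dist_le_dist_max[OF i, of t z] j(2) by simp
      ultimately show ?thesis unfolding real_norm_def abs_le_iff j(2) by linarith
    qed
    then show "\<forall>\<^sub>F t in sequentially. norm (\<bar>x i t - z\<bar> - dist_max z t) \<le> spread t"
      by (simp add: always_eventually)
  qed
  from tendsto_add[OF this l] show ?thesis unfolding convergent_def by auto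
qed

lemma eventually_above_limit:
  assumes "\<forall>i\<in>N. (\<lambda>t. x i t) \<longlonglongrightarrow> w" "c < w"
  shows "\<forall>\<^sub>F t in sequentially. \<forall>i\<in>N. c \<le> x i t"
proof -
  have "\<forall>\<^sub>F t in sequentially. \<forall>i\<in>N. c < x i t"
  proof (rule eventually_ball_finite[OF finite_N], rule ballI)
    show "\<forall>\<^sub>F t in sequentially. c < x i t" if "i \<in> N" for i
      using assms that by (intro order_tendstoD(1)[of "\<lambda>t. x i t" w]) auto
  qed
  then show ?thesis by (rule eventually_mono) (auto intro: less_imp_le)
qed

lemma eventually_below_limit:
  assumes "\<forall>i\<in>N. (\<lambda>t. x i t) \<longlonglongrightarrow> w" "w < c"
  shows "\<forall>\<^sub>F t in sequentially. \<forall>i\<in>N. x i t \<le> c"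
proof -
  have "\<forall>\<^sub>F t in sequentially. \<forall>i\<in>N. x i t < c"
  proof (rule eventually_ball_finite[OF finite_N], rule ballI)
    show "\<forall>\<^sub>F t in sequentially. x i t < c" if "i \<in> N" for i
      using assms that by (intro order_tendstoD(2)[of "\<lambda>t. x i t" w]) auto
  qed
  then show ?thesis by (rule eventually_mono) (auto intro: less_imp_le)
qed

theorem consensus:
  assumes toward: "\<And>i t. i \<in> N \<Longrightarrow> 0 \<le> d i t * (x i t - z)"
  shows "\<exists>w. \<forall>i\<in>N. (\<lambda>t. x i t) \<longlonglongrightarrow> w"
proof -
  obtain i0 where i0: "i0 \<in> N" using N_nonempty by blast
  obtain l where "(\<lambda>t. \<bar>x i0 t - z\<bar>) \<longlonglongrightarrow> l"
    using dist_convergent[OF toward i0] unfolding convergent_def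
    by blast
  then have "convergent (\<lambda>t. x i0 t)"
    by (rule convergent_if_dist_convergent[OF _ steps_tendsto_zero[OF i0]])
  then obtain w where w: "(\<lambda>t. x i0 t) \<longlonglongrightarrow> w" unfolding convergent_def by blast
  have "(\<lambda>t. x i t) \<longlonglongrightarrow> w" if i: "i \<in> N" for i
  proof -
    have "(\<lambda>t. x i t - w) \<longlonglongrightarrow> 0"
    proof (rule Lim_null_comparison)
      have "\<bar>x i t - w\<bar> \<le> \<bar>x i t - x i0 t\<bar> + \<bar>x i0 t - w\<bar>" for t
        using abs_triangle_ineq[of "x i t - x i0 t" "x i0 t - w"] by simp
      then have "\<bar>x i t - w\<bar> \<le> spread t + \<bar>x i0 t - w\<bar>" for t
        using dist_le_spread[OF i i0, of t] by linarith
      then show "\<forall>\<^sub>F t in sequentially. norm (x i t - w) \<le> spread t + \<bar>x i0 t - w\<bar>"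
        by (simp add: always_eventually)
      show "(\<lambda>t. spread t + \<bar>x i0 t - w\<bar>) \<longlonglongrightarrow> 0"
        using tendsto_add[OF spread_tendsto_zero tendsto_rabs[OF LIM_zero[OF w]]] by simp
    qed
    then show ?thesis by (simp add: LIM_zero_iff)
  qed
  then show ?thesis by blast
qed

end

section \<open>Convergence to a common minimizer\<close>

locale distributed_minimization = consensus_dynamics +
  fixes k :: nat and h :: "nat \<Rightarrow> real \<Rightarrow> real" and A :: "nat \<Rightarrow> nat \<Rightarrow> real"
  assumes k_pos: "1 \<le> k"
    and admissible: "\<And>j. j \<in> {1..k} \<Longrightarrow> admissible L (h j)"
    and weights_nonneg: "\<And>j i. j \<in> {1..k} \<Longrightarrow> i \<in> N \<Longrightarrow> 0 \<le> A j i"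
    and subgradient: "\<And>i t. i \<in> N \<Longrightarrow> subgradient (\<lambda>y. \<Sum>j=1..k. A j i * h j y) (x i t) (d i t)"
    and common_minimizer: "(\<Inter>j\<in>{1..k}. argmin_set (h j)) \<noteq> {}"
    and supports_expand: "\<And>j S. j \<in> {1..k} \<Longrightarrow> {i \<in> N. 0 < A j i} \<subseteq> S \<Longrightarrow> S \<subset> N \<Longrightarrow>
      expandable N E f S"
begin

definition minimizers :: "real set" where
  "minimizers = (\<Inter>j\<in>{1..k}. argmin_set (h j))"

lemma minimizers_compact: "compact minimizers"
  unfolding minimizers_def using admissible k_pos
    by (intro compact_Inter) (auto simp: admissible_def)

lemma minimizers_between:
  assumes "p \<in> minimizers" "q \<in> minimizers" "p \<le> w" "w \<le> q"
  shows "w \<in> minimizers"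
proof -
  have "convex minimizers"
    unfolding minimizers_def using admissible
      by (intro convex_INT convex_argmin_set) (auto simp: admissible_def)
  then have "is_interval minimizers" by (simp only: is_interval_convex_1)
  then show ?thesis using assms unfolding is_interval_1 by blast
qed

lemma weighted_descent:
  assumes z: "z \<in> minimizers" and j: "j \<in> {1..k}" and i: "i \<in> N"
  shows "A j i * (h j (x i t) - h j z) \<le> d i t * (x i t - z)"
proof -
  have "A j i * (h j (x i t) - h j z) \<le> (\<Sum>l=1..k. A l i * (h l (x i t) - h l z))"
    using j z weights_nonneg[OF _ i] unfolding minimizers_def argmin_set_def
    by (intro member_le_sum) (auto simp: mult_nonneg_nonneg)
  also have "\<dots> = (\<Sum>l=1..k. A l i * h l (x i t)) - (\<Sum>l=1..k. A l i * h l z)"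
    by (simp add: right_diff_distrib sum_subtractf)
  also have "\<dots> \<le> d i t * (x i t - z)" by (rule subgradient_descent[OF subgradient[OF i]])
  finally show ?thesis .
qed

lemma subgradient_toward_minimizers:
  assumes z: "z \<in> minimizers" and i: "i \<in> N"
  shows "0 \<le> d i t * (x i t - z)"
proof -
  have "(\<Sum>j=1..k. A j i * h j z) \<le> (\<Sum>j=1..k. A j i * h j (x i t))"
    using z weights_nonneg[OF _ i] unfolding minimizers_def argmin_set_def
    by (intro sum_mono mult_left_mono) auto
  then show ?thesis using subgradient_descent[OF subgradient[OF i, of t], of z] by linarith
qed

lemma subgradient_ge_slope:
  assumes q: "q \<in> minimizers" and j: "j \<in> {1..k}" and i: "i \<in> N" and c: "q < c" "c \<le> x i t"
  shows "A j i * ((h j c - h j q) / (c - q)) \<le> d i t"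
proof -
  have "(h j c - h j q) / (c - q) \<le> (h j (x i t) - h j q) / (x i t - q)"
  proof (cases "c = x i t")
    case False
    have flip: "(u - v) / (w - y) = (v - u) / (y - w)" for u v w y :: real
      by (metis minus_diff_eq minus_divide_divide)
    have "(h j q - h j c) / (q - c) \<le> (h j q - h j (x i t)) / (q - x i t)"
      using admissible[OF j] c False
        by (intro convex_on_slope_le(1)[of UNIV]) (auto simp: admissible_def)
    then show ?thesis by (simp only: flip[of "h j q"] flip[of q])
  qed simp
  from mult_left_mono[OF this weights_nonneg[OF j i]]
  have "A j i * ((h j c - h j q) / (c - q)) \<le> A j i * (h j (x i t) - h j q) / (x i t - q)"
    by (simp only: times_divide_eq_right)
  also have "\<dots> \<le> d i t"
    using c by (subst pos_divide_le_eq) (auto intro: weighted_descent[OF q j i])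
  finally show ?thesis .
qed

lemma subgradient_le_slope:
  assumes q: "q \<in> minimizers" and j: "j \<in> {1..k}" and i: "i \<in> N" and c: "c < q" "x i t \<le> c"
  shows "d i t \<le> A j i * ((h j c - h j q) / (c - q))"
proof -
  have "d i t \<le> A j i * (h j (x i t) - h j q) / (x i t - q)"
    using c by (subst neg_le_divide_eq) (auto intro: weighted_descent[OF q j i])
  also have "(h j (x i t) - h j q) / (x i t - q) \<le> (h j c - h j q) / (c - q)"
  proof (cases "c = x i t")
    case False
    then show ?thesis
      using admissible[OF j] c by (intro convex_on_slope_le(2)[of UNIV]) (auto simp: admissible_def)
  qed simp
  from mult_left_mono[OF this weights_nonneg[OF j i]]
  have "A j i * (h j (x i t) - h j q) / (x i t - q) \<le> A j i * ((h j c - h j q) / (c - q))"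
    by (simp only: times_divide_eq_right)
  finally show ?thesis .
qed

lemma outside_minimizers:
  assumes q: "q \<in> minimizers" and c: "c \<notin> minimizers"
  obtains j where "j \<in> {1..k}" and "h j q < h j c"
proof -
  obtain j where j: "j \<in> {1..k}" "c \<notin> argmin_set (h j)" using c unfolding minimizers_def by blast
  then obtain y where "\<not> h j c \<le> h j y" unfolding argmin_set_def by blast
  moreover have "h j q \<le> h j y" using q j(1) unfolding minimizers_def argmin_set_def by blast
  ultimately have "h j q < h j c" by linarith
  then show ?thesis using that j(1) by blast
qed

lemma positive_weights_bounded_below: "\<exists>m>0. \<forall>i\<in>N. 0 < A j i \<longrightarrow> m \<le> A j i"
proof (intro exI conjI ballI impI)
  show "0 < Min (insert 1 ((\<lambda>i. A j i) ` {i \<in> N. 0 < A j i}))"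
    using finite_N by (subst Min_gr_iff) auto
  show "Min (insert 1 ((\<lambda>i. A j i) ` {i \<in> N. 0 < A j i})) \<le> A j i" if "i \<in> N" "0 < A j i" for i
    using finite_N that by (intro Min_le) auto
qed

text \<open>Beyond the minimizers some \<open>h j\<close> is not minimal; the agents giving it positive weight are
  pushed back by subgradients bounded away from zero, all others at least weakly.\<close>

lemma not_eventually_above_minimizers:
  assumes q: "q \<in> minimizers" and c: "q < c" "c \<notin> minimizers"
  shows "\<not> (\<forall>\<^sub>F t in sequentially. \<forall>i\<in>N. c \<le> x i t)"
proof
  assume above: "\<forall>\<^sub>F t in sequentially. \<forall>i\<in>N. c \<le> x i t"
  obtain j where j: "j \<in> {1..k}" "h j q < h j c" using outside_minimizers[OF q c(2)] .
  obtain m where m: "0 < m" "\<And>i. i \<in> N \<Longrightarrow> 0 < A j i \<Longrightarrow> m \<le> A j i"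
    using positive_weights_bounded_below[of j] by blast
  define \<delta> where "\<delta> = m * ((h j c - h j q) / (c - q))"
  have \<delta>: "0 < \<delta>" unfolding \<delta>_def using m(1) j(2) c(1) by simp
  have "\<forall>\<^sub>F t in sequentially. \<forall>i\<in>N. 0 \<le> d i t"
    using above
  proof (rule eventually_mono, intro ballI)
    fix t i assume "\<forall>i\<in>N. c \<le> x i t" and i: "i \<in> N"
    then have "0 < x i t - q" using c(1) by force
    then show "0 \<le> d i t" using subgradient_toward_minimizers[OF q i, of t]
      by (simp add: zero_le_mult_iff)
  qed
  moreover have "\<forall>\<^sub>F t in sequentially. \<forall>i\<in>{i \<in> N. 0 < A j i}. \<delta> \<le> d i t"
    using above
  proof (rule eventually_mono, intro ballI)
    fix t i assume "\<forall>i\<in>N. c \<le> x i t" "i \<in> {i \<in> N. 0 < A j i}"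
    then have i: "i \<in> N" "c \<le> x i t" "m \<le> A j i" using m(2) by auto
    have "\<delta> \<le> A j i * ((h j c - h j q) / (c - q))"
      unfolding \<delta>_def using i(3) j(2) c(1) by (intro mult_right_mono) auto
    also have "\<dots> \<le> d i t" by (rule subgradient_ge_slope[OF q j(1) i(1) c(1) i(2)])
    finally show "\<delta> \<le> d i t" .
  qed
  ultimately have "\<not> (\<forall>\<^sub>F t in sequentially. \<forall>i\<in>N. c \<le> x i t)"
    by (intro descent_unbounded[OF _ supports_expand[OF j(1)] \<delta>]) auto
  then show False using above by contradiction
qed

lemma not_eventually_below_minimizers:
  assumes p: "p \<in> minimizers" and c: "c < p" "c \<notin> minimizers"
  shows "\<not> (\<forall>\<^sub>F t in sequentially. \<forall>i\<in>N. x i t \<le> c)"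
proof
  assume below: "\<forall>\<^sub>F t in sequentially. \<forall>i\<in>N. x i t \<le> c"
  obtain j where j: "j \<in> {1..k}" "h j p < h j c" using outside_minimizers[OF p c(2)] .
  obtain m where m: "0 < m" "\<And>i. i \<in> N \<Longrightarrow> 0 < A j i \<Longrightarrow> m \<le> A j i"
    using positive_weights_bounded_below[of j] by blast
  define \<delta> where "\<delta> = m * ((h j c - h j p) / (p - c))"
  have \<delta>: "0 < \<delta>" unfolding \<delta>_def using m(1) j(2) c(1) by simp
  have "\<forall>\<^sub>F t in sequentially. \<forall>i\<in>N. 0 \<le> - d i t"
    using below
  proof (rule eventually_mono, intro ballI)
    fix t i assume "\<forall>i\<in>N. x i t \<le> c" and i: "i \<in> N"
    then have "x i t - p < 0" using c(1) by force
    then show "0 \<le> - d i t" using subgradient_toward_minimizers[OF p i, of t]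
      by (simp add: zero_le_mult_iff)
  qed
  moreover have "\<forall>\<^sub>F t in sequentially. \<forall>i\<in>{i \<in> N. 0 < A j i}. \<delta> \<le> - d i t"
    using below
  proof (rule eventually_mono, intro ballI)
    fix t i assume "\<forall>i\<in>N. x i t \<le> c" "i \<in> {i \<in> N. 0 < A j i}"
    then have i: "i \<in> N" "x i t \<le> c" "m \<le> A j i" using m(2) by auto
    have "\<delta> \<le> A j i * ((h j c - h j p) / (p - c))"
      unfolding \<delta>_def using i(3) j(2) c(1) by (intro mult_right_mono) auto
    also have "\<dots> = - (A j i * ((h j c - h j p) / (c - p)))" by (simp add: minus_divide_right)
    also have "\<dots> \<le> - d i t" using subgradient_le_slope[OF p j(1) i(1) c(1) i(2)] by simp
    finally show "\<delta> \<le> - d i t" .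
  qed
  ultimately have "\<not> (\<forall>\<^sub>F t in sequentially. \<forall>i\<in>N. - c \<le> - x i t)"
    by (intro consensus_dynamics.descent_unbounded[OF negated_dynamics _ supports_expand[OF j(1)] \<delta>]) auto
  then show False using below by simp
qed

lemma limit_in_minimizers:
  assumes w: "\<forall>i\<in>N. (\<lambda>t. x i t) \<longlonglongrightarrow> w"
  shows "w \<in> minimizers"
proof (rule ccontr)
  assume out: "w \<notin> minimizers"
  have nonempty: "minimizers \<noteq> {}" using common_minimizer by (simp add: minimizers_def)
  obtain p where p: "p \<in> minimizers" "\<forall>y\<in>minimizers. p \<le> y"
    using compact_attains_inf[OF minimizers_compact nonempty] by blast
  obtain q where q: "q \<in> minimizers" "\<forall>y\<in>minimizers. y \<le> q"
    using compact_attains_sup[OF minimizers_compact nonempty] by blast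
  have "\<not> (p \<le> w \<and> w \<le> q)" using minimizers_between[OF p(1) q(1)] out by blast
  then consider "q < w" | "w < p" by (auto simp: not_le)
  then show False
  proof cases
    case 1
    have "q < (q + w) / 2" "(q + w) / 2 < w" using 1 by simp_all
    moreover have "(q + w) / 2 \<notin> minimizers" using q(2) \<open>q < (q + w) / 2\<close>
      by (auto simp: not_le[symmetric])
    ultimately show False
      using not_eventually_above_minimizers[OF q(1)] eventually_above_limit[OF w]
      by blast
  next
    case 2
    have "(p + w) / 2 < p" "w < (p + w) / 2" using 2 by simp_all
    moreover have "(p + w) / 2 \<notin> minimizers" using p(2) \<open>(p + w) / 2 < p\<close>
      by (auto simp: not_le[symmetric])
    ultimately show False
      using not_eventually_below_minimizers[OF p(1)] eventually_below_limit[OF w]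
      by blast
  qed
qed

theorem converges_to_minimizer: "\<exists>w\<in>minimizers. \<forall>i\<in>N. (\<lambda>t. x i t) \<longlonglongrightarrow> w"
proof -
  obtain z where "z \<in> minimizers" using common_minimizer by (auto simp: minimizers_def)
  then obtain w where "\<forall>i\<in>N. (\<lambda>t. x i t) \<longlonglongrightarrow> w"
    using consensus[OF subgradient_toward_minimizers] by blast
  then show ?thesis using limit_in_minimizers by blast
qed

end

context byzantine_network
begin

lemma card_honest_le: "card honest \<le> n"
  using card_mono[of "{1..n}" honest] by simp

lemma cols_pos_sparsity:
  assumes sp: "sp = sparsity k n A"
  shows "cols_pos k n A sp"
proof -
  have "(sp \<le> n \<and> cols_pos k n A sp) \<or> sp = n + 1"
    unfolding sp sparsity_def by (rule LeastI[of _ "n + 1"]) simp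
  moreover have "sp \<le> n" using sparsity_le_card_honest card_honest_le by linarith
  ultimately show ?thesis by auto
qed

lemma honest_nonempty:
  assumes sp: "sp = sparsity k n A" and k: "1 \<le> k"
  shows "honest \<noteq> {}"
proof -
  have "sp \<noteq> 0"
  proof
    assume "sp = 0"
    then have "0 < (\<Sum>i\<in>{}. A 1 i)"
      using cols_pos_sparsity[OF sp, unfolded cols_pos_def, rule_format, of "{}" 1] k by simp
    then show False by simp
  qed
  then have "0 < card honest" using sparsity_le_card_honest by linarith
  then show ?thesis by (metis card.empty less_irrefl)
qed

lemma alg2_exec_distributed_minimization:
  assumes exec: "alg2_exec {1..n} E f F \<alpha> (\<lambda>i y. \<Sum>j=1..k. A j i * h j y) msg x"
    and sp: "sp = sparsity k n A" and k: "1 \<le> k" and adm: "\<forall>j\<in>{1..k}. admissible L (h j)"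
    and A_nonneg: "\<forall>j\<in>{1..k}. \<forall>i\<in>{1..n}. 0 \<le> A j i" and A_sum: "\<forall>i\<in>{1..n}. (\<Sum>j=1..k. A j i) = 1"
    and minimizer: "(\<Inter>j\<in>{1..k}. argmin_set (h j)) \<noteq> {}"
    and \<alpha>: "\<forall>t. 0 \<le> \<alpha> t" "\<forall>t. \<alpha> (t + 1) \<le> \<alpha> t"
      "filterlim (\<lambda>M. \<Sum>t<M. \<alpha> t) at_top sequentially" "summable (\<lambda>t. (\<alpha> t)\<^sup>2)"
  obtains a d where "distributed_minimization honest E f n \<alpha> L x a d k h A"
proof -
  define step where "step i t a' d' \<longleftrightarrow> x i (Suc t) = a' - \<alpha> t * d' \<and>
      subgradient (\<lambda>y. \<Sum>j=1..k. A j i * h j y) (x i t) d' \<and>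
      averaging_step honest E f n (\<lambda>j. x j t) a' i \<and> averaging_step honest E f n (\<lambda>j. - x j t) (- a') i"
    for i t a' d'
  have ex: "\<exists>p. step i t (fst p) (snd p)" if i: "i \<in> honest" for i t
  proof -
    have "alg2_update E f \<alpha> (\<lambda>y. \<Sum>j=1..k. A j i * h j y) msg x i (Suc t)"
      "\<forall>j\<in>honest. msg (Suc t) j i = x j t"
      using exec i unfolding alg2_exec_def by auto
    then obtain a' d' where "step i t a' d'" unfolding step_def
      by (rule alg2_update_decomposition[OF i]) blast
    then show ?thesis by auto
  qed
  define a where "a i t = fst (SOME p. step i t (fst p) (snd p))" for i t
  define d where "d i t = snd (SOME p. step i t (fst p) (snd p))" for i t
  have ad: "step i t (a i t) (d i t)" if "i \<in> honest" for i t
    unfolding a_def d_def by (rule someI_ex[OF ex[OF that]])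
  have lipschitz: "L-lipschitz_on UNIV (\<lambda>y. \<Sum>j=1..k. A j i * h j y)" if "i \<in> honest" for i
    using adm A_nonneg A_sum that
      by (intro convex_combination_lipschitz) (auto simp: admissible_def)
  show ?thesis
  proof (rule that, unfold_locales)
    show "\<bar>d i t\<bar> \<le> L" if "i \<in> honest" for i t
      using ad[OF that] lipschitz[OF that] unfolding step_def by (blast intro: subgradient_abs_le)
    show "Lo \<union> Hi = honest \<Longrightarrow> Lo \<subset> honest \<Longrightarrow> Hi \<subset> honest \<Longrightarrow>
        expandable honest E f Lo \<or> expandable honest E f Hi" for Lo Hi
      by (rule proper_cover_expandable)
    show "decseq \<alpha>" using \<alpha>(2) by (intro decseq_SucI) simp
    show "card honest \<le> n" by (rule card_honest_le)
    show "j \<in> {1..k} \<Longrightarrow> {i \<in> honest. 0 < A j i} \<subseteq> S \<Longrightarrow> S \<subset> honest \<Longrightarrow> expandable honest E f S"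
      for j S using support_superset_expandable[OF cols_pos_sparsity[OF sp]] A_nonneg by blast
  qed (use ad adm A_nonneg minimizer k \<alpha> honest_nonempty[OF sp k] in \<open>auto simp: step_def\<close>)
qed

end

theorem theorem4:
  fixes n k f :: nat and E :: "(nat \<times> nat) set" and F :: "nat set"
    and L :: real and h :: "nat \<Rightarrow> real \<Rightarrow> real" and A :: "nat \<Rightarrow> nat \<Rightarrow> real"
    and \<alpha> :: "nat \<Rightarrow> real" and msg :: "nat \<Rightarrow> nat \<Rightarrow> nat \<Rightarrow> real" and x :: "nat \<Rightarrow> nat \<Rightarrow> real"
  assumes "n \<ge> 1" and "k \<ge> 1"
    and "E \<subseteq> {1..n} \<times> {1..n}" and "\<forall>i. (i, i) \<notin> E"
    and "F \<subseteq> {1..n}" and "card F \<le> f"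
    and "\<forall>j\<in>{1..k}. admissible L (h j)"
    and "\<forall>j\<in>{1..k}. \<forall>i\<in>{1..n}. A j i \<ge> 0"
    and "\<forall>i\<in>{1..n}. (\<Sum>j=1..k. A j i) = 1"
    and "condition1 {1..n} E f (sparsity k n A)"
    and "(\<Inter>j\<in>{1..k}. argmin_set (h j)) \<noteq> {}"
    and "\<forall>t. \<alpha> t \<ge> 0" and "\<forall>t. \<alpha> (t + 1) \<le> \<alpha> t"
    and "filterlim (\<lambda>N. \<Sum>t<N. \<alpha> t) at_top sequentially"
    and "summable (\<lambda>t. (\<alpha> t)\<^sup>2)"
    and "alg2_exec {1..n} E f F \<alpha> (\<lambda>i y. \<Sum>j=1..k. A j i * h j y) msg x"
  shows "\<exists>xs\<in>argmin_set (\<lambda>y. (1 / real k) * (\<Sum>j=1..k. h j y)).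
           \<forall>i\<in>{1..n} - F. ((\<lambda>t. \<bar>x i t - xs\<bar>) \<longlongrightarrow> 0) sequentially"
proof -
  interpret byzantine_network n f E F "sparsity k n A"
    using assms(3-6,10) by unfold_locales auto
  obtain a d where "distributed_minimization ({1..n} - F) E f n \<alpha> L x a d k h A"
    using alg2_exec_distributed_minimization[OF assms(16) refl assms(2,7-9,11-15)] by blast
  then interpret distributed_minimization "{1..n} - F" E f n \<alpha> L x a d k h A .
  obtain w where w: "w \<in> minimizers" and lim: "\<forall>i\<in>{1..n} - F. (\<lambda>t. x i t) \<longlonglongrightarrow> w"
    using converges_to_minimizer by blast
  have "w \<in> argmin_set (\<lambda>y. (1 / real k) * (\<Sum>j=1..k. h j y))"
    using w unfolding minimizers_def by (intro common_minimizer_argmin_average) blast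
  moreover have "(\<lambda>t. \<bar>x i t - w\<bar>) \<longlonglongrightarrow> 0" if "i \<in> {1..n} - F" for i
    using lim that by (simp add: tendsto_rabs_zero_iff LIM_zero_iff)
  ultimately show ?thesis by blast
qed

end
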